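(* Let $(X,d)$ be a compact metric space and $f:X\to X$ a continuous map. Then $$\mathcal{E}(f_{\mathcal{M}})=h_{top}(f).$$
   Context: $h_{top}(f)$ is the topological entropy of $f$. For $n\in\mathbb{N}$, $d_n(x,y)=\max_{0\le i\le n-1} d(f^ix,f^iy)$ is the $n$th Bowen metric. $\mathcal{M}(X)$ is the set of Borel probability measures on $X$ (weak* topology), and $f_{\mathcal M}:\mathcal M(X)\to\mathcal M(X)$ is $f_{\mathcal M}\mu=\mu\circ f^{-1}$. For $\mu,\nu\in\mathcal M(X)$, $\Pi(\mu,\nu)$ is the set of Borel probability measures on $X\times X$ with marginals $\mu$ and $\nu$, and $W_1^n(\mu,\nu)=\inf_{\pi\in\Pi(\mu,\nu)}\int d_n(x,y)\,d\pi(x,y)$. For nonempty $\mathcal Z\subset\mathcal M(X)$, $n\in\mathbb N$, $\varepsilon>0$, $N_{\mathcal M}(\mathcal Z,n,\varepsilon)$ is the smallest cardinality of a set $E\subset\mathcal M(X)$ such that for every $\mu\in\mathcal Z$ there is $\nu\in E$ with $W_1^n(\mu,\nu)\le\varepsilon$. The entropy order is $\mathcal E(f_{\mathcal M},\mathcal Z)=\lim_{\varepsilon\to0}\limsup_{n\to\infty}\frac{\log\log N_{\mathcal M}(\mathcal Z,n,\varepsilon)}{n}$ (convention $\log 0=0$), and $\mathcal E(f_{\mathcal M}):=\mathcal E(f_{\mathcal M},\mathcal M(X))$. *)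

theory Defs
  imports "HOL-Probability.Probability"
begin

definition lg :: "real \<Rightarrow> real" where
  "lg x = (if x \<le> 0 then 0 else ln x)"

definition bowen_dist :: "('a::metric_space \<Rightarrow> 'a) \<Rightarrow> nat \<Rightarrow> 'a \<Rightarrow> 'a \<Rightarrow> real" where
  "bowen_dist f n x y = Max ((\<lambda>i. dist ((f ^^ i) x) ((f ^^ i) y)) ` {..<n})"

definition spanning_number :: "('a::metric_space \<Rightarrow> 'a) \<Rightarrow> nat \<Rightarrow> real \<Rightarrow> nat" where
  "spanning_number f n \<epsilon> =
     Inf {card E | E. finite E \<and> (\<forall>x. \<exists>y\<in>E. bowen_dist f n x y \<le> \<epsilon>)}"

definition top_entropy :: "('a::metric_space \<Rightarrow> 'a) \<Rightarrow> ereal" where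
  "top_entropy f = Lim (at_right 0)
     (\<lambda>\<epsilon>. limsup (\<lambda>n. ereal (lg (real (spanning_number f n \<epsilon>)) / real n)))"

text \<open>Borel probability measures on X (here X is the whole type).\<close>
definition prob_measures :: "'a::topological_space measure set" where
  "prob_measures = {\<mu>. prob_space \<mu> \<and> sets \<mu> = sets borel}"

definition push_fwd :: "('a::topological_space \<Rightarrow> 'a) \<Rightarrow> 'a measure \<Rightarrow> 'a measure" where
  "push_fwd f \<mu> = distr \<mu> borel f"

definition couplings :: "'a::topological_space measure \<Rightarrow> 'a measure \<Rightarrow> ('a \<times> 'a) measure set" where
  "couplings \<mu> \<nu> = {\<pi>. prob_space \<pi> \<and> sets \<pi> = sets borel \<and>
                         distr \<pi> borel fst = \<mu> \<and> distr \<pi> borel snd = \<nu>}"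

definition wasserstein_n :: "('a::metric_space \<Rightarrow> 'a) \<Rightarrow> nat \<Rightarrow> 'a measure \<Rightarrow> 'a measure \<Rightarrow> real" where
  "wasserstein_n f n \<mu> \<nu> =
     (INF \<pi>\<in>couplings \<mu> \<nu>. integral\<^sup>L \<pi> (\<lambda>p. bowen_dist f n (fst p) (snd p)))"

definition cover_number_M :: "('a::metric_space \<Rightarrow> 'a) \<Rightarrow> 'a measure set \<Rightarrow> nat \<Rightarrow> real \<Rightarrow> nat" where
  "cover_number_M f Z n \<epsilon> =
     Inf {card E | E. finite E \<and> E \<subseteq> prob_measures \<and>
                      (\<forall>\<mu>\<in>Z. \<exists>\<nu>\<in>E. wasserstein_n f n \<mu> \<nu> \<le> \<epsilon>)}"

definition entropy_order :: "('a::metric_space \<Rightarrow> 'a) \<Rightarrow> 'a measure set \<Rightarrow> ereal" where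
  "entropy_order f Z = Lim (at_right 0)
     (\<lambda>\<epsilon>. limsup (\<lambda>n. ereal (lg (lg (real (cover_number_M f Z n \<epsilon>))) / real n)))"

end

theory Submission
  imports Defs
begin

text \<open>Lower bound: let \<open>S\<close> be a maximal \<open>(n, 4 r)\<close>-separated set, of size \<open>K\<close> at least the
  spanning number, and fix \<open>s\<^sub>0 \<in> S\<close>. Each \<open>B \<subseteq> S - {s\<^sub>0}\<close> gives the measure
  \<open>\<mu>\<^sub>B = |S|\<^sup>-\<^sup>1 (\<Sum>\<^sub>s\<^sub>\<in>\<^sub>B \<delta>\<^sub>s + |S - B| \<delta>\<^sub>s\<^sub>0)\<close>. Testing against sums of \<open>d\<^sub>n\<close>-Lipschitz bumps of
  radius \<open>2 r\<close> around the points of \<open>S\<close> shows that a measure \<open>r/16\<close>-close to both \<open>\<mu>\<^sub>B\<close> and \<open>\<mu>\<^sub>B\<^sub>'\<close>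
  forces \<open>|B \<triangle> B'| \<le> K/16\<close>. So every element of an \<open>r/16\<close>-cover serves only a Hamming ball among
  the \<open>2\<^sup>K\<^sup>-\<^sup>1\<close> sets \<open>B\<close>, and the cover has at least \<open>exp (K/8)\<close> elements.

  Upper bound: given a minimal \<open>(n, e)\<close>-spanning set \<open>F\<close> of size \<open>K\<close> and \<open>m \<approx> diam X \<cdot> K / e\<close>,
  move every point to a point of \<open>F\<close> within \<open>d\<^sub>n\<close>-distance \<open>e\<close>, but keep at each point of \<open>F\<close>
  only its mass rounded down to a multiple of \<open>1/m\<close>, sending the rest to a fixed point. This
  costs at most \<open>2 e\<close> in \<open>W\<^sub>1\<^sup>n\<close> and produces at most \<open>(m + 1)\<^sup>K\<close> measures, so
  \<open>log log N\<^sub>\<M>(n, 2 e) \<le> (1 + \<theta>) log K + C(e, \<theta>)\<close> for every \<open>\<theta> > 0\<close>.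

  Dividing by \<open>n\<close> and letting first \<open>n \<rightarrow> \<infinity>\<close>, then the scale tend to \<open>0\<close>, both bounds
  converge to \<open>h\<^sub>t\<^sub>o\<^sub>p(f)\<close>.\<close>

lemma lg_eq_ln: "0 < x \<Longrightarrow> lg x = ln x"
  unfolding lg_def by simp

lemma lg_lg_ge_minus_one: "-1 \<le> lg (lg (real N))"
proof (cases "N \<le> 1")
  case True
  then have "lg (real N) = 0" unfolding lg_def by (cases N) auto
  then show ?thesis unfolding lg_def by simp
next
  case False
  then have "ln 2 \<le> ln (real N)" by simp
  then have lnN: "2/3 \<le> ln (real N)" using ln2_ge_two_thirds by linarith
  then have "ln (2/3) \<le> ln (ln (real N))" by simp
  moreover have "ln (2/3::real) = - ln (3/2)" by (simp add: ln_div)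
  moreover have "ln (3/2::real) \<le> 1/2" using ln_le_minus_one[of "3/2"] by simp
  ultimately show ?thesis using lnN False by (simp add: lg_eq_ln)
qed

lemma ln_add_le:
  fixes a x \<theta> :: real
  assumes a: "1 \<le> a" and \<theta>: "0 < \<theta>" "\<theta> \<le> 1" and x: "0 \<le> x"
  shows "ln (a + x) \<le> ln (a / \<theta>) + \<theta> * x"
proof -
  have pos: "0 < \<theta> * (a + x) / a" using a \<theta> x by simp
  have "ln (a + x) - ln (a / \<theta>) = ln (\<theta> * (a + x) / a)"
    using a \<theta> x by (simp add: ln_div ln_mult)
  also have "\<dots> \<le> \<theta> * (a + x) / a - 1" by (rule ln_le_minus_one[OF pos])
  also have "\<dots> = \<theta> - 1 + \<theta> * x / a" using a by (simp add: field_simps)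
  also have "\<dots> \<le> \<theta> * x / a" using \<theta> by simp
  also have "\<dots> \<le> \<theta> * x / 1" by (rule divide_left_mono) (use a \<theta> x in auto)
  finally show ?thesis by simp
qed

lemma abs_mult_le_of_abs_le_one: "\<bar>c\<bar> \<le> 1 \<Longrightarrow> \<bar>c * a\<bar> \<le> \<bar>a :: real\<bar>"
  by (simp add: abs_mult mult_left_le_one_le)

lemma limsup_const_over_n: "limsup (\<lambda>n. ereal (c / real n)) = 0"
proof -
  have "(\<lambda>n. ereal (c / real n)) \<longlonglongrightarrow> ereal 0"
    by (rule tendsto_ereal[OF lim_const_over_n])
  then show ?thesis using lim_imp_Limsup[OF trivial_limit_sequentially] zero_ereal_def by metis
qed

lemma ereal_le_of_le_one_plus_mult:
  fixes a b :: ereal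
  assumes b: "0 \<le> b" and le: "\<And>\<theta>. 0 < \<theta> \<Longrightarrow> \<theta> \<le> 1 \<Longrightarrow> a \<le> ereal (1 + \<theta>) * b"
  shows "a \<le> b"
proof (cases b)
  case (real t)
  have t: "0 \<le> t" using b real by simp
  show ?thesis
  proof (rule ereal_le_epsilon2)
    fix \<delta> :: real assume \<delta>: "0 < \<delta>"
    define \<theta> where "\<theta> = min 1 (\<delta> / (t + 1))"
    have \<theta>: "0 < \<theta>" "\<theta> \<le> 1" unfolding \<theta>_def using t \<delta> by auto
    have "\<theta> * (t + 1) \<le> \<delta> / (t + 1) * (t + 1)"
      unfolding \<theta>_def by (rule mult_right_mono) (use t in auto)
    also have "\<dots> = \<delta>" using t by simp
    finally have "(1 + \<theta>) * t \<le> t + \<delta>" using \<theta> by (simp add: algebra_simps)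
    then have "ereal (1 + \<theta>) * b \<le> b + ereal \<delta>" using real by simp
    then show "a \<le> b + ereal \<delta>" using le[OF \<theta>] by (rule order_trans[rotated])
  qed
qed (use b in auto)

lemma card_subsets_card_le:
  assumes "finite T"
  shows "card {A. A \<subseteq> T \<and> card A \<le> j} \<le> (\<Sum>i\<le>j. card T choose i)"
proof -
  have "{A. A \<subseteq> T \<and> card A \<le> j} = (\<Union>i\<le>j. {A. A \<subseteq> T \<and> card A = i})" by auto
  then have "card {A. A \<subseteq> T \<and> card A \<le> j} \<le> (\<Sum>i\<le>j. card {A. A \<subseteq> T \<and> card A = i})"
    using card_UN_le[of "{..j}" "\<lambda>i. {A. A \<subseteq> T \<and> card A = i}"] by simp
  also have "\<dots> = (\<Sum>i\<le>j. card T choose i)" using n_subsets[OF assms] by simp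
  finally show ?thesis .
qed

text \<open>Each element of \<open>E\<close> accounts for at most a Hamming ball of radius \<open>j\<close>.\<close>
lemma two_pow_card_le_card_mult_ball:
  assumes fin: "finite T" "finite E"
    and cov: "\<And>B. B \<subseteq> T \<Longrightarrow> \<exists>\<nu>\<in>E. P B \<nu>"
    and close: "\<And>\<nu> B B'. B \<subseteq> T \<Longrightarrow> B' \<subseteq> T \<Longrightarrow> P B \<nu> \<Longrightarrow> P B' \<nu> \<Longrightarrow>
                  card (B - B') + card (B' - B) \<le> j"
  shows "2 ^ card T \<le> card E * (\<Sum>i\<le>j. card T choose i)"
proof -
  let ?C = "\<lambda>\<nu>. {B. B \<subseteq> T \<and> P B \<nu>}"
  have C: "card (?C \<nu>) \<le> (\<Sum>i\<le>j. card T choose i)" for \<nu>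
  proof (cases "?C \<nu> = {}")
    case False
    then obtain B0 where B0: "B0 \<subseteq> T" "P B0 \<nu>" by auto
    let ?h = "\<lambda>B. (B - B0) \<union> (B0 - B)"
    have inj: "inj_on ?h (?C \<nu>)" by (rule inj_onI) blast
    have "?h ` ?C \<nu> \<subseteq> {A. A \<subseteq> T \<and> card A \<le> j}"
    proof
      fix A assume "A \<in> ?h ` ?C \<nu>"
      then obtain B where B: "B \<subseteq> T" "P B \<nu>" "A = ?h B" by auto
      have "card A \<le> card (B - B0) + card (B0 - B)" using B(3) by (simp add: card_Un_le)
      also have "\<dots> \<le> j" using close[OF B(1) B0(1) B(2) B0(2)] .
      finally show "A \<in> {A. A \<subseteq> T \<and> card A \<le> j}" using B B0 by auto
    qed
    then have "card (?C \<nu>) \<le> card {A. A \<subseteq> T \<and> card A \<le> j}"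
      using card_inj_on_le[OF inj] fin by simp
    also have "\<dots> \<le> (\<Sum>i\<le>j. card T choose i)" by (rule card_subsets_card_le[OF fin(1)])
    finally show ?thesis .
  qed (simp only: card.empty)
  have "2 ^ card T = card (Pow T)" using fin by (simp add: card_Pow)
  also have "\<dots> \<le> card (\<Union>\<nu>\<in>E. ?C \<nu>)" using cov fin by (intro card_mono) auto
  also have "\<dots> \<le> (\<Sum>\<nu>\<in>E. card (?C \<nu>))" by (rule card_UN_le[OF fin(2)])
  also have "\<dots> \<le> (\<Sum>\<nu>\<in>E. (\<Sum>i\<le>j. card T choose i))" by (rule sum_mono[OF C])
  finally show ?thesis by simp
qed

lemma sum_binomial_mult_power_le:
  fixes x :: real
  assumes "0 \<le> x"
  shows "(\<Sum>i\<le>j. real (L choose i) * x ^ i) \<le> (1 + x) ^ L"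
proof -
  have "(\<Sum>i\<le>j. real (L choose i) * x ^ i) \<le> (\<Sum>i\<le>L. real (L choose i) * x ^ i)"
  proof (cases "j \<le> L")
    case True
    then show ?thesis by (intro sum_mono2) (use assms in auto)
  next
    case False
    then show ?thesis by (subst sum.mono_neutral_right[of "{..j}" "{..L}"]) auto
  qed
  also have "\<dots> = (1 + x) ^ L" using binomial_ring[of x 1 L] by (simp add: add.commute)
  finally show ?thesis .
qed

lemma sum_binomial_le: "real (\<Sum>i\<le>j. L choose i) \<le> 8 ^ j * (9/8) ^ L"
proof -
  have "real (\<Sum>i\<le>j. L choose i) \<le> (\<Sum>i\<le>j. 8 ^ j * (real (L choose i) * (1/8) ^ i))"
    unfolding of_nat_sum
  proof (rule sum_mono)
    fix i assume "i \<in> {..j}"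
    then have "(8::real) ^ j * (1/8) ^ i = 8 ^ (j - i)" by (simp add: power_diff power_one_over)
    then have "1 \<le> (8::real) ^ j * (1/8) ^ i" by simp
    then show "real (L choose i) \<le> 8 ^ j * (real (L choose i) * (1/8) ^ i)"
      using mult_right_mono[of 1 "(8::real) ^ j * (1/8) ^ i" "real (L choose i)"] by (simp add: algebra_simps)
  qed
  also have "\<dots> = 8 ^ j * (\<Sum>i\<le>j. real (L choose i) * (1/8) ^ i)" by (simp add: sum_distrib_left)
  also have "\<dots> \<le> 8 ^ j * (1 + 1/8) ^ L" by (intro mult_left_mono sum_binomial_mult_power_le) auto
  finally show ?thesis by simp
qed

lemma quarter_le_ln_of_two_power_le:
  fixes N L j :: nat
  assumes h: "2 ^ L \<le> N * (\<Sum>i\<le>j. L choose i)" and jL: "8 * j \<le> L"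
  shows "real L / 4 \<le> ln (real N)"
proof -
  have le: "(2::real) ^ L \<le> real N * (8 ^ j * (9/8) ^ L)"
  proof -
    have "(2::real) ^ L \<le> real N * real (\<Sum>i\<le>j. L choose i)"
      using h by (metis of_nat_le_iff of_nat_mult of_nat_numeral of_nat_power)
    also have "\<dots> \<le> real N * (8 ^ j * (9/8) ^ L)" by (intro mult_left_mono sum_binomial_le) auto
    finally show ?thesis .
  qed
  moreover have "(0::real) < 2 ^ L" by simp
  ultimately have N: "0 < N" by (cases N) auto
  have "ln ((2::real) ^ L) \<le> ln (real N * (8 ^ j * (9/8) ^ L))"
    using le N by simp
  then have "real L * ln 2 \<le> ln (real N) + real j * ln 8 + real L * ln (9/8)"
    using N by (simp add: ln_mult ln_realpow)
  moreover have "real j * ln 8 \<le> real L * (3/8) * ln 2"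
  proof -
    have "real j * ln 8 = (real j * 8) * ((3/8) * ln 2)" using ln_realpow[of 2 3] by simp
    also have "\<dots> \<le> real L * ((3/8) * ln 2)"
      by (rule mult_right_mono) (use jL ln2_ge_two_thirds in linarith)+
    finally show ?thesis by simp
  qed
  moreover have "real L * ln (9/8) \<le> real L * (1/8)"
    using ln_le_minus_one[of "9/8"] by (intro mult_left_mono) auto
  ultimately have "real L * ((5/8) * ln 2 - 1/8) \<le> ln (real N)" by (simp add: algebra_simps)
  moreover have "real L * (1/4) \<le> real L * ((5/8) * ln 2 - 1/8)"
    using ln2_ge_two_thirds by (intro mult_left_mono) auto
  ultimately show ?thesis by simp
qed

lemma lg_lg_le_of_le_power:
  fixes N K :: nat and c \<theta> :: real
  assumes N: "real N \<le> (c * real K) ^ K" and c: "3 \<le> c" and K: "1 \<le> K" and \<theta>: "0 < \<theta>" "\<theta> \<le> 1"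
  shows "lg (lg (real N)) \<le> (1 + \<theta>) * ln (real K) + ln (max 1 (ln c) / \<theta>)"
proof -
  define a where "a = max 1 (ln c)"
  have a: "1 \<le> a" unfolding a_def by simp
  have lnK: "0 \<le> ln (real K)" using K by simp
  show ?thesis
  proof (cases "N \<le> 1")
    case True
    then have "lg (lg (real N)) = 0" unfolding lg_def by (cases N) auto
    moreover have "0 \<le> ln (a / \<theta>)" using a \<theta> by (simp add: pos_le_divide_eq)
    ultimately show ?thesis using lnK \<theta> unfolding a_def by simp
  next
    case False
    then have N2: "2 \<le> real N" by simp
    have lnc: "0 < ln c" using c by simp
    have "ln (real N) \<le> ln ((c * real K) ^ K)" using N N2 by simp
    also have "\<dots> = real K * (ln c + ln (real K))" using c K by (simp add: ln_realpow ln_mult)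
    finally have lnN: "ln (real N) \<le> real K * (ln c + ln (real K))" .
    have lnN0: "0 < ln (real N)" using N2 by simp
    have "lg (lg (real N)) = ln (ln (real N))" using N2 lnN0 by (simp add: lg_eq_ln)
    also have "\<dots> \<le> ln (real K * (ln c + ln (real K)))" using lnN lnN0 by simp
    also have "\<dots> = ln (real K) + ln (ln c + ln (real K))"
    proof -
      have "0 < ln c + ln (real K)" using lnc lnK by linarith
      then show ?thesis using K by (simp add: ln_mult)
    qed
    also have "ln (ln c + ln (real K)) \<le> ln (a + ln (real K))"
      using lnc lnK a unfolding a_def by simp
    also have "\<dots> \<le> ln (a / \<theta>) + \<theta> * ln (real K)" by (rule ln_add_le[OF a \<theta> lnK])
    finally show ?thesis unfolding a_def by (simp add: algebra_simps)
  qed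
qed

lemma measurable_cong_borel: "sets M = sets borel \<Longrightarrow> g \<in> borel \<rightarrow>\<^sub>M N \<Longrightarrow> g \<in> M \<rightarrow>\<^sub>M N"
  using measurable_cong_sets[of M borel N N] by auto

lemma prob_measuresD:
  "\<mu> \<in> prob_measures \<Longrightarrow> prob_space \<mu> \<and> sets \<mu> = sets borel \<and> space \<mu> = UNIV"
  unfolding prob_measures_def using sets_eq_imp_space_eq[of \<mu> borel] by auto

definition borel_pmf :: "'a::topological_space pmf \<Rightarrow> 'a measure" where
  "borel_pmf p = distr (measure_pmf p) borel (\<lambda>x. x)"

lemma borel_pmf_in_prob_measures: "borel_pmf p \<in> prob_measures"
  unfolding prob_measures_def borel_pmf_def
  by (auto intro!: measure_pmf.prob_space_distr simp: measurable_pmf_measure1)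

lemma integral_borel_pmf:
  fixes g :: "'a::topological_space \<Rightarrow> real"
  shows "g \<in> borel_measurable borel \<Longrightarrow> integral\<^sup>L (borel_pmf p) g = measure_pmf.expectation p g"
  unfolding borel_pmf_def using integral_distr[of "\<lambda>x. x" "measure_pmf p" borel g]
  by (simp add: measurable_pmf_measure1)

lemma independent_coupling_borel_pmf:
  fixes p :: "'a::topological_space pmf"
  assumes \<nu>: "\<nu> \<in> prob_measures"
  shows "(measure_pmf p \<bind> (\<lambda>s. distr \<nu> borel (Pair s))) \<in> couplings (borel_pmf p) \<nu>"
proof -
  have P: "prob_space \<nu>" "sets \<nu> = sets borel" using \<nu> by (auto dest: prob_measuresD)
  let ?\<pi> = "measure_pmf p \<bind> (\<lambda>s. distr \<nu> borel (Pair s))"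
  have Pair: "Pair s \<in> \<nu> \<rightarrow>\<^sub>M borel" for s :: 'a
    by (intro measurable_cong_borel[OF P(2)] borel_measurable_continuous_onI continuous_intros)
  have K: "(\<lambda>s. distr \<nu> borel (Pair s)) \<in> measure_pmf p \<rightarrow>\<^sub>M subprob_algebra borel"
    unfolding measurable_pmf_measure1
    by (auto simp: space_subprob_algebra
        intro!: prob_space_imp_subprob_space prob_space.prob_space_distr[OF P(1)] Pair)
  have fst: "fst \<in> (borel :: ('a \<times> 'a) measure) \<rightarrow>\<^sub>M borel"
    and snd: "snd \<in> (borel :: ('a \<times> 'a) measure) \<rightarrow>\<^sub>M borel"
    by (intro borel_measurable_continuous_onI continuous_intros)+
  have "distr ?\<pi> borel fst = measure_pmf p \<bind> (\<lambda>s. distr (distr \<nu> borel (Pair s)) borel fst)"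
    by (rule distr_bind[OF K _ fst]) simp
  also have "\<dots> = measure_pmf p \<bind> return borel"
  proof (rule bind_cong[OF refl])
    fix s :: 'a
    show "distr (distr \<nu> borel (Pair s)) borel fst = return borel s"
      using distr_distr[OF fst Pair] prob_space.distr_const[OF P(1), of s borel] by (simp add: o_def)
  qed
  also have "\<dots> = borel_pmf p"
    unfolding borel_pmf_def by (rule bind_return_distr') (auto simp: measurable_pmf_measure1)
  finally have fst_marginal: "distr ?\<pi> borel fst = borel_pmf p" .
  have "distr ?\<pi> borel snd = measure_pmf p \<bind> (\<lambda>s. distr (distr \<nu> borel (Pair s)) borel snd)"
    by (rule distr_bind[OF K _ snd]) simp
  also have "\<dots> = measure_pmf p \<bind> (\<lambda>s. \<nu>)"
  proof (rule bind_cong[OF refl])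
    fix s :: 'a
    show "distr (distr \<nu> borel (Pair s)) borel snd = \<nu>"
      using distr_distr[OF snd Pair] distr_id2[of borel \<nu>] P(2) by (simp add: o_def)
  qed
  also have "\<dots> = \<nu>"
    by (rule bind_const') (auto intro: prob_space_imp_subprob_space P(1) measure_pmf.prob_space_axioms)
  finally have snd_marginal: "distr ?\<pi> borel snd = \<nu>" .
  have "prob_space ?\<pi>"
    by (rule measure_pmf.prob_space_bind[OF _ K]) (auto intro: prob_space.prob_space_distr[OF P(1)] Pair)
  moreover have "sets ?\<pi> = sets borel" by (rule sets_bind) auto
  ultimately show ?thesis unfolding couplings_def using fst_marginal snd_marginal by auto
qed

lemma nn_integral_finite_range:
  fixes \<phi> :: "'a \<Rightarrow> 'b" and G :: "'b \<Rightarrow> ennreal"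
  assumes "finite F" and "\<And>x. \<phi> x \<in> F" and "\<And>y. {x. \<phi> x = y} \<in> sets M" and "space M = UNIV"
  shows "(\<integral>\<^sup>+x. G (\<phi> x) \<partial>M) = (\<Sum>y\<in>F. G y * emeasure M {x. \<phi> x = y})"
proof -
  have "G (\<phi> x) = (\<Sum>y\<in>F. G y * indicator {x. \<phi> x = y} x)" for x
    using assms(1,2) by (simp add: indicator_def of_bool_def[symmetric])
  then have "(\<integral>\<^sup>+x. G (\<phi> x) \<partial>M) = (\<integral>\<^sup>+x. (\<Sum>y\<in>F. G y * indicator {x. \<phi> x = y} x) \<partial>M)"
    by simp
  also have "\<dots> = (\<Sum>y\<in>F. (\<integral>\<^sup>+x. G y * indicator {x. \<phi> x = y} x \<partial>M))"
    by (rule nn_integral_sum) (use assms(3,4) in auto)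
  also have "\<dots> = (\<Sum>y\<in>F. G y * emeasure M {x. \<phi> x = y})"
    using assms(3) by (simp add: nn_integral_cmult_indicator)
  finally show ?thesis .
qed

lemma nn_integral_bernoulli_pmf:
  assumes "0 \<le> q" "q \<le> 1"
  shows "(\<integral>\<^sup>+b. u b \<partial>measure_pmf (bernoulli_pmf q)) = u True * ennreal q + u False * ennreal (1 - q)"
proof -
  have "(\<integral>\<^sup>+b. u b \<partial>measure_pmf (bernoulli_pmf q)) = (\<Sum>b\<in>UNIV. u b * ennreal (pmf (bernoulli_pmf q) b))"
    by (rule nn_integral_measure_pmf_support) auto
  then show ?thesis using assms by (simp add: UNIV_bool)
qed

lemma ennreal_convex_combination_mult:
  fixes a b r p :: real
  assumes "0 \<le> a" "0 \<le> b" "0 \<le> r" "r \<le> 1" "0 \<le> p"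
  shows "(ennreal a * ennreal r + ennreal b * ennreal (1 - r)) * ennreal p
       = ennreal (a * (r * p) + b * ((1 - r) * p))"
proof -
  have "ennreal a * ennreal r + ennreal b * ennreal (1 - r) = ennreal (a * r + b * (1 - r))"
    using assms by (simp add: ennreal_mult ennreal_plus)
  also have "\<dots> * ennreal p = ennreal ((a * r + b * (1 - r)) * p)"
    using assms by (simp add: ennreal_mult)
  finally show ?thesis by (simp add: algebra_simps)
qed

section \<open>The Bowen metric\<close>

locale compact_dynamical_system =
  fixes f :: "'a::metric_space \<Rightarrow> 'a"
  assumes compact_space: "compact (UNIV :: 'a set)"
    and continuous_f: "continuous_on UNIV f"
begin

abbreviation bd :: "nat \<Rightarrow> 'a \<Rightarrow> 'a \<Rightarrow> real" where "bd \<equiv> bowen_dist f"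

lemma continuous_on_funpow: "continuous_on UNIV (f ^^ i)"
proof (induction i)
  case (Suc i)
  have "continuous_on UNIV (f \<circ> (f ^^ i))"
    by (rule continuous_on_compose[OF Suc]) (use continuous_f in \<open>auto intro: continuous_on_subset\<close>)
  then show ?case by simp
qed (simp add: continuous_on_id)

lemma dist_funpow_le_bowen_dist: "i < n \<Longrightarrow> dist ((f ^^ i) x) ((f ^^ i) y) \<le> bd n x y"
  unfolding bowen_dist_def by (rule Max_ge) auto

lemma bowen_dist_le:
  "0 < n \<Longrightarrow> (\<And>i. i < n \<Longrightarrow> dist ((f ^^ i) x) ((f ^^ i) y) \<le> c) \<Longrightarrow> bd n x y \<le> c"
  unfolding bowen_dist_def by (subst Max_le_iff) auto

lemma bowen_dist_attained: "0 < n \<Longrightarrow> \<exists>i<n. bd n x y = dist ((f ^^ i) x) ((f ^^ i) y)"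
proof -
  assume "0 < n"
  then have "bd n x y \<in> (\<lambda>i. dist ((f ^^ i) x) ((f ^^ i) y)) ` {..<n}"
    unfolding bowen_dist_def by (intro Max_in) auto
  then show ?thesis by auto
qed

lemma bowen_dist_nonneg: "0 < n \<Longrightarrow> 0 \<le> bd n x y"
  using dist_funpow_le_bowen_dist[of 0 n x y] zero_le_dist order_trans by blast

lemma bowen_dist_commute: "bd n x y = bd n y x"
  unfolding bowen_dist_def by (simp add: dist_commute)

lemma bowen_dist_self: "0 < n \<Longrightarrow> bd n x x = 0"
  using bowen_dist_attained[of n x x] by auto

lemma bowen_dist_triangle: "0 < n \<Longrightarrow> bd n x z \<le> bd n x y + bd n y z"
proof -
  assume n: "0 < n"
  obtain i where i: "i < n" "bd n x z = dist ((f ^^ i) x) ((f ^^ i) z)"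
    using bowen_dist_attained[OF n] by blast
  have "dist ((f ^^ i) x) ((f ^^ i) z) \<le> dist ((f ^^ i) x) ((f ^^ i) y) + dist ((f ^^ i) y) ((f ^^ i) z)"
    by (rule dist_triangle)
  also have "\<dots> \<le> bd n x y + bd n y z"
    using dist_funpow_le_bowen_dist[OF i(1)] by (intro add_mono)
  finally show ?thesis using i by simp
qed

lemma bowen_dist_Suc:
  "0 < n \<Longrightarrow> bd (Suc n) x y = max (bd n x y) (dist ((f ^^ n) x) ((f ^^ n) y))"
  unfolding bowen_dist_def lessThan_Suc by (subst image_insert, subst Max_insert) auto

lemma continuous_on_bowen_dist: "0 < n \<Longrightarrow> continuous_on UNIV (\<lambda>p. bd n (fst p) (snd p))"
proof (induction n rule: nat_induct_non_zero)
  case 1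
  have "bd 1 x y = dist x y" for x y
    using bowen_dist_attained[of 1 x y] by auto
  then show ?case by (simp add: continuous_on_dist continuous_on_fst continuous_on_snd)
next
  case (Suc n)
  have "continuous_on UNIV (\<lambda>p::'a \<times> 'a. dist ((f ^^ n) (fst p)) ((f ^^ n) (snd p)))"
    by (intro continuous_on_dist continuous_on_compose2[OF continuous_on_funpow]
        continuous_on_fst continuous_on_snd continuous_on_id) auto
  then show ?case unfolding bowen_dist_Suc[OF Suc(1)] by (intro continuous_on_max Suc)
qed

lemma continuous_on_bowen_dist_left: "0 < n \<Longrightarrow> continuous_on UNIV (\<lambda>x. bd n x y)"
  by (rule continuous_on_compose2[OF continuous_on_bowen_dist, of n UNIV "\<lambda>x. (x, y)", simplified])
    (auto intro: continuous_intros)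

lemma borel_measurable_bowen_dist:
  "0 < n \<Longrightarrow> (\<lambda>p. bd n (fst p) (snd p)) \<in> borel_measurable borel"
  by (rule borel_measurable_continuous_onI[OF continuous_on_bowen_dist])

definition diam_bound :: real where
  "diam_bound = (SOME D. D > 0 \<and> (\<forall>x y::'a. dist x y \<le> D))"

lemma diam_bound_pos: "diam_bound > 0" and dist_le_diam_bound: "dist (x::'a) y \<le> diam_bound"
proof -
  obtain e where e: "\<forall>y::'a. dist undefined y \<le> e"
    using compact_imp_bounded[OF compact_space] bounded_any_center by (metis UNIV_I)
  have "\<forall>x y::'a. dist x y \<le> 2 * e + 1"
  proof (intro allI)
    fix x y :: 'a
    have "dist x y \<le> dist undefined x + dist undefined y" by (rule dist_triangle3)
    then show "dist x y \<le> 2 * e + 1" using e[rule_format, of x] e[rule_format, of y] by simp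
  qed
  moreover have "0 < 2 * e + 1" using e[rule_format, of undefined] by simp
  ultimately have "\<exists>D. D > 0 \<and> (\<forall>x y::'a. dist x y \<le> D)" by blast
  from someI_ex[OF this] show "diam_bound > 0" "dist (x::'a) y \<le> diam_bound"
    unfolding diam_bound_def by auto
qed

lemma bowen_dist_le_diam_bound: "0 < n \<Longrightarrow> bd n x y \<le> diam_bound"
  by (rule bowen_dist_le) (auto intro: dist_le_diam_bound)

definition spanning :: "nat \<Rightarrow> real \<Rightarrow> 'a set \<Rightarrow> bool" where
  "spanning n e E \<longleftrightarrow> finite E \<and> (\<forall>x. \<exists>y\<in>E. bd n x y \<le> e)"

definition separated :: "nat \<Rightarrow> real \<Rightarrow> 'a set \<Rightarrow> bool" where
  "separated n r S \<longleftrightarrow> finite S \<and> (\<forall>s\<in>S. \<forall>t\<in>S. s \<noteq> t \<longrightarrow> r < bd n s t)"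

lemma ex_spanning: "0 < n \<Longrightarrow> 0 < e \<Longrightarrow> \<exists>E. spanning n e E"
proof -
  assume n: "0 < n" and e: "0 < e"
  have "open {x. bd n x y < e}" for y
  proof -
    have "\<forall>B. open B \<longrightarrow> open {x. bd n x y \<in> B}"
      using continuous_on_bowen_dist_left[OF n, of y] by (simp add: continuous_on_open_vimage vimage_def)
    from this[rule_format, OF open_lessThan[of e]] show ?thesis by simp
  qed
  moreover have "UNIV \<subseteq> (\<Union>y. {x. bd n x y < e})" using bowen_dist_self[OF n] e by auto
  ultimately obtain C where "finite C" "UNIV \<subseteq> (\<Union>y\<in>C. {x. bd n x y < e})"
    by (rule compactE_image[OF compact_space])
  then have "spanning n e C" unfolding spanning_def by (auto intro: less_imp_le)
  then show ?thesis ..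
qed

lemma spanning_number_eq: "spanning_number f n e = Inf {card E | E. spanning n e E}"
  unfolding spanning_number_def spanning_def by simp

lemma spanning_number_attained:
  "0 < n \<Longrightarrow> 0 < e \<Longrightarrow> \<exists>E. spanning n e E \<and> card E = spanning_number f n e"
proof -
  assume "0 < n" "0 < e"
  then have "{card E | E. spanning n e E} \<noteq> {}" using ex_spanning by auto
  then show ?thesis using Inf_nat_def1[of "{card E | E. spanning n e E}"] unfolding spanning_number_eq by auto
qed

lemma spanning_number_le: "spanning n e E \<Longrightarrow> spanning_number f n e \<le> card E"
  unfolding spanning_number_eq by (rule cInf_lower) auto

lemma spanning_number_ge_one: "0 < n \<Longrightarrow> 0 < e \<Longrightarrow> 1 \<le> spanning_number f n e"
proof -
  assume "0 < n" "0 < e"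
  then obtain E where E: "spanning n e E" "card E = spanning_number f n e"
    using spanning_number_attained by blast
  moreover have "E \<noteq> {}" using E(1) unfolding spanning_def by blast
  ultimately have "0 < card E" unfolding spanning_def by (auto simp: card_gt_0_iff)
  then show ?thesis using E by simp
qed

lemma spanning_number_antimono:
  assumes "0 < n" "0 < e" "e \<le> e'"
  shows "spanning_number f n e' \<le> spanning_number f n e"
proof -
  obtain E where E: "spanning n e E" "card E = spanning_number f n e"
    using spanning_number_attained assms by blast
  then have "spanning n e' E" using assms(3) unfolding spanning_def by (meson order_trans)
  then show ?thesis using E spanning_number_le by force
qed

lemma card_separated_le_card_spanning:
  assumes n: "0 < n" and S: "separated n (2 * e) S" and E: "spanning n e E"
  shows "card S \<le> card E"
proof -
  obtain g where g: "\<And>s. g s \<in> E \<and> bd n s (g s) \<le> e"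
    using E unfolding spanning_def by metis
  have "inj_on g S"
  proof
    fix s t assume st: "s \<in> S" "t \<in> S" "g s = g t"
    have "bd n s t \<le> bd n s (g s) + bd n (g s) t" by (rule bowen_dist_triangle[OF n])
    also have "\<dots> \<le> 2 * e" using g[of s] g[of t] st(3) bowen_dist_commute[of n t] by simp
    finally show "s = t" using S st unfolding separated_def by force
  qed
  then show ?thesis using g E unfolding spanning_def by (meson card_inj_on_le image_subset_iff)
qed

text \<open>A maximal \<open>r\<close>-separated set is \<open>r\<close>-spanning.\<close>
lemma ex_separated_card_ge_spanning_number:
  assumes n: "0 < n" and r: "0 < r"
  shows "\<exists>S. separated n r S \<and> spanning_number f n r \<le> card S"
proof -
  obtain E where E: "spanning n (r / 2) E" using ex_spanning[OF n] r by fastforce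
  have "separated n r {}" unfolding separated_def by simp
  moreover have "\<forall>S. separated n r S \<longrightarrow> card S < Suc (card E)"
    using card_separated_le_card_spanning[OF n _ E] by (simp add: less_Suc_eq_le)
  ultimately obtain S where S: "separated n r S" and max: "\<And>T. separated n r T \<Longrightarrow> card T \<le> card S"
    using ex_has_greatest_nat[of "separated n r" "{}" card "Suc (card E)"] by blast
  have "spanning n r S"
    unfolding spanning_def
  proof (intro conjI allI)
    show "finite S" using S separated_def by auto
    fix x show "\<exists>y\<in>S. bd n x y \<le> r"
    proof (rule ccontr)
      assume "\<not> ?thesis"
      then have far: "\<forall>y\<in>S. r < bd n x y" by auto
      then have "x \<notin> S" using bowen_dist_self[OF n] r by force
      moreover have "separated n r (insert x S)"
        using S far bowen_dist_commute[of n] unfolding separated_def by auto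
      ultimately show False using max[of "insert x S"] S unfolding separated_def by simp
    qed
  qed
  then show ?thesis using S spanning_number_le by blast
qed

section \<open>Couplings and Lipschitz test functions\<close>

lemma couplingsD:
  assumes "\<pi> \<in> couplings \<mu> \<nu>"
  shows "prob_space \<pi>" "sets \<pi> = sets borel" "distr \<pi> borel fst = \<mu>" "distr \<pi> borel snd = \<nu>"
  using assms unfolding couplings_def by auto

lemma integrable_bowen_dist:
  assumes "\<pi> \<in> couplings \<mu> \<nu>" "0 < n"
  shows "integrable \<pi> (\<lambda>p. bd n (fst p) (snd p))"
proof -
  interpret prob_space \<pi> using couplingsD[OF assms(1)] by simp
  show ?thesis
    by (rule integrable_const_bound[where B = diam_bound])
      (use bowen_dist_le_diam_bound[OF assms(2)] bowen_dist_nonneg[OF assms(2)] in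
        \<open>auto intro!: measurable_cong_borel[OF couplingsD(2)[OF assms(1)]] borel_measurable_bowen_dist[OF assms(2)]\<close>)
qed

lemma wasserstein_n_le_cost:
  assumes "\<pi> \<in> couplings \<mu> \<nu>" "0 < n"
  shows "wasserstein_n f n \<mu> \<nu> \<le> integral\<^sup>L \<pi> (\<lambda>p. bd n (fst p) (snd p))"
  unfolding wasserstein_n_def
proof (rule cINF_lower[OF _ assms(1)])
  show "bdd_below ((\<lambda>\<pi>. integral\<^sup>L \<pi> (\<lambda>p. bd n (fst p) (snd p))) ` couplings \<mu> \<nu>)"
    by (rule bdd_belowI[of _ 0]) (auto intro!: integral_nonneg_AE bowen_dist_nonneg[OF assms(2)])
qed

text \<open>The easy half of Kantorovich--Rubinstein duality.\<close>
lemma integral_diff_le_wasserstein_n: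
  assumes ne: "couplings \<mu> \<nu> \<noteq> {}" and n: "0 < n"
    and g: "g \<in> borel_measurable borel" "\<And>x. \<bar>g x\<bar> \<le> B"
    and lip: "\<And>x y. g x - g y \<le> bd n x y"
  shows "integral\<^sup>L \<mu> g - integral\<^sup>L \<nu> g \<le> wasserstein_n f n \<mu> \<nu>"
  unfolding wasserstein_n_def
proof (rule cINF_greatest[OF ne])
  fix \<pi> assume \<pi>: "\<pi> \<in> couplings \<mu> \<nu>"
  interpret prob_space \<pi> using couplingsD[OF \<pi>] by simp
  have fst: "fst \<in> \<pi> \<rightarrow>\<^sub>M borel" and snd: "snd \<in> \<pi> \<rightarrow>\<^sub>M borel"
    by (intro measurable_cong_borel[OF couplingsD(2)[OF \<pi>]] borel_measurable_continuous_onI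
        continuous_intros)+
  have int: "integrable \<pi> (\<lambda>p. g (fst p))" "integrable \<pi> (\<lambda>p. g (snd p))"
    by (rule integrable_const_bound[where B = B];
        use g(2) in \<open>auto intro: measurable_compose[OF fst g(1)] measurable_compose[OF snd g(1)]\<close>)+
  have "integral\<^sup>L \<mu> g - integral\<^sup>L \<nu> g = integral\<^sup>L \<pi> (\<lambda>p. g (fst p) - g (snd p))"
    using integral_distr[OF fst g(1)] integral_distr[OF snd g(1)] couplingsD(3,4)[OF \<pi>] int
    by simp
  also have "\<dots> \<le> integral\<^sup>L \<pi> (\<lambda>p. bd n (fst p) (snd p))"
    by (intro integral_mono Bochner_Integration.integrable_diff int
        integrable_bowen_dist[OF \<pi> n] lip)
  finally show "integral\<^sup>L \<mu> g - integral\<^sup>L \<nu> g \<le> integral\<^sup>L \<pi> (\<lambda>p. bd n (fst p) (snd p))" .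
qed

definition bump :: "nat \<Rightarrow> real \<Rightarrow> 'a \<Rightarrow> 'a \<Rightarrow> real" where
  "bump n r s x = max 0 (2 * r - bd n x s)"

lemma bump_nonneg: "0 \<le> bump n r s x"
  unfolding bump_def by simp

lemma bump_le: "0 < n \<Longrightarrow> 0 \<le> r \<Longrightarrow> bump n r s x \<le> 2 * r"
  unfolding bump_def using bowen_dist_nonneg by auto

lemma bump_center: "0 < n \<Longrightarrow> 0 \<le> r \<Longrightarrow> bump n r s s = 2 * r"
  unfolding bump_def using bowen_dist_self by simp

lemma bump_pos_eq: "0 < bump n r s x \<Longrightarrow> bump n r s x = 2 * r - bd n x s"
  unfolding bump_def by simp

lemma bump_lipschitz: "0 < n \<Longrightarrow> \<bar>bump n r s x - bump n r s y\<bar> \<le> bd n x y"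
  unfolding bump_def
  using bowen_dist_triangle[of n x s y] bowen_dist_triangle[of n y s x] bowen_dist_commute[of n x y]
  by (auto simp: abs_le_iff)

lemma continuous_on_bump: "0 < n \<Longrightarrow> continuous_on UNIV (bump n r s)"
  unfolding bump_def by (intro continuous_intros continuous_on_bowen_dist_left)

lemma bump_disjoint:
  assumes n: "0 < n" and S: "separated n (4 * r) S" and st: "s \<in> S" "t \<in> S" "s \<noteq> t"
    and pos: "0 < bump n r s x"
  shows "bump n r t x = 0"
proof -
  have "4 * r < bd n t s" using S st unfolding separated_def by auto
  moreover have "bd n t s \<le> bd n t x + bd n x s" by (rule bowen_dist_triangle[OF n])
  moreover have "bd n x s < 2 * r" using pos unfolding bump_def by simp
  ultimately show ?thesis unfolding bump_def using bowen_dist_commute[of n t x] by simp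
qed

definition bump_sum :: "nat \<Rightarrow> real \<Rightarrow> 'a set \<Rightarrow> ('a \<Rightarrow> real) \<Rightarrow> 'a \<Rightarrow> real" where
  "bump_sum n r S c x = (\<Sum>s\<in>S. c s * bump n r s x)"

lemma bump_sum_eq_single:
  assumes "finite S" "s \<in> S" "\<And>t. t \<in> S - {s} \<Longrightarrow> bump n r t x = 0"
  shows "bump_sum n r S c x = c s * bump n r s x"
  unfolding bump_sum_def using assms by (subst sum.remove[of S s]) auto

lemma bump_sum_diff_le_single:
  assumes S: "finite S" and c: "\<And>s. \<bar>c s\<bar> \<le> 1"
    and u: "\<And>t. t \<in> S - {u} \<Longrightarrow> bump n r t x = 0 \<and> bump n r t y = 0"
  shows "bump_sum n r S c x - bump_sum n r S c y \<le> \<bar>bump n r u x - bump n r u y\<bar>"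
proof -
  have "bump_sum n r S c x - bump_sum n r S c y = (\<Sum>s\<in>S. c s * (bump n r s x - bump n r s y))"
    unfolding bump_sum_def by (simp add: sum_subtractf algebra_simps)
  also have "\<dots> = (\<Sum>s\<in>S \<inter> {u}. c s * (bump n r s x - bump n r s y))"
    using u by (intro sum.mono_neutral_right S) auto
  also have "\<dots> \<le> \<bar>bump n r u x - bump n r u y\<bar>"
    using abs_mult_le_of_abs_le_one[OF c[of u], of "bump n r u x - bump n r u y"]
    by (cases "u \<in> S") auto
  finally show ?thesis .
qed

lemma bumps_vanish_except_one:
  assumes n: "0 < n" and S: "separated n (4 * r) S"
    and no_pair: "\<not> (\<exists>s\<in>S. \<exists>t\<in>S. s \<noteq> t \<and> 0 < bump n r s x \<and> 0 < bump n r t y)"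
  obtains u where "\<And>t. t \<in> S - {u} \<Longrightarrow> bump n r t x = 0 \<and> bump n r t y = 0"
proof -
  have zero: "bump n r t z = 0" if "\<not> 0 < bump n r t z" for t z
    using that bump_nonneg[of n r t z] by simp
  show ?thesis
  proof (cases "\<exists>s\<in>S. 0 < bump n r s x")
    case True
    then obtain s where s: "s \<in> S" "0 < bump n r s x" by blast
    show ?thesis
    proof (rule that[of s])
      fix t assume t: "t \<in> S - {s}"
      then have "bump n r t x = 0" using bump_disjoint[OF n S s(1) _ _ s(2)] by auto
      moreover have "bump n r t y = 0" using no_pair s t by (intro zero) auto
      ultimately show "bump n r t x = 0 \<and> bump n r t y = 0" ..
    qed
  next
    case False
    then have x: "bump n r t x = 0" if "t \<in> S" for t using zero that by auto
    show ?thesis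
    proof (cases "\<exists>t\<in>S. 0 < bump n r t y")
      case True
      then obtain t where t: "t \<in> S" "0 < bump n r t y" by blast
      show ?thesis
        by (rule that[of t]) (use x bump_disjoint[OF n S t(1) _ _ t(2)] in auto)
    next
      case False
      show ?thesis by (rule that[of undefined]) (use False x zero in auto)
    qed
  qed
qed

text \<open>At every point at most one bump is active, so only two bumps matter for a pair of points;
  if they are different, their centres are \<open>4 r\<close>-apart.\<close>
lemma bump_sum_lipschitz:
  assumes n: "0 < n" and S: "separated n (4 * r) S" and c: "\<And>s. \<bar>c s\<bar> \<le> 1"
  shows "bump_sum n r S c x - bump_sum n r S c y \<le> bd n x y"
proof (cases "\<exists>s\<in>S. \<exists>t\<in>S. s \<noteq> t \<and> 0 < bump n r s x \<and> 0 < bump n r t y")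
  case True
  then obtain s t where st: "s \<in> S" "t \<in> S" "s \<noteq> t" "0 < bump n r s x" "0 < bump n r t y"
    by blast
  have fin: "finite S" using S unfolding separated_def by simp
  have "bump_sum n r S c x = c s * bump n r s x"
    by (rule bump_sum_eq_single[OF fin st(1)]) (use bump_disjoint[OF n S st(1) _ _ st(4)] in auto)
  moreover have "bump_sum n r S c y = c t * bump n r t y"
    by (rule bump_sum_eq_single[OF fin st(2)]) (use bump_disjoint[OF n S st(2) _ _ st(5)] in auto)
  ultimately have "bump_sum n r S c x - bump_sum n r S c y = c s * bump n r s x - c t * bump n r t y"
    by simp
  also have "\<dots> \<le> bump n r s x + bump n r t y"
    using abs_mult_le_of_abs_le_one[OF c[of s], of "bump n r s x"]
      abs_mult_le_of_abs_le_one[OF c[of t], of "bump n r t y"] bump_nonneg[of n r]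
    by (simp add: abs_le_iff)
  also have "\<dots> = 4 * r - bd n x s - bd n y t" using bump_pos_eq[OF st(4)] bump_pos_eq[OF st(5)] by simp
  also have "\<dots> \<le> bd n x y"
  proof -
    have "4 * r < bd n s t" using S st(1-3) unfolding separated_def by blast
    then show ?thesis
      using bowen_dist_triangle[OF n, of s t x] bowen_dist_triangle[OF n, of x t y]
        bowen_dist_commute[of n x s] by linarith
  qed
  finally show ?thesis .
next
  case False
  have fin: "finite S" using S unfolding separated_def by simp
  obtain u where u: "\<And>t. t \<in> S - {u} \<Longrightarrow> bump n r t x = 0 \<and> bump n r t y = 0"
    using bumps_vanish_except_one[OF n S False] by blast
  have "bump_sum n r S c x - bump_sum n r S c y \<le> \<bar>bump n r u x - bump n r u y\<bar>"
    by (rule bump_sum_diff_le_single[OF fin c u])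
  also have "\<dots> \<le> bd n x y" by (rule bump_lipschitz[OF n])
  finally show ?thesis .
qed

lemma continuous_on_bump_sum: "0 < n \<Longrightarrow> continuous_on UNIV (bump_sum n r S c)"
  unfolding bump_sum_def by (intro continuous_intros continuous_on_bump)

lemma bump_sum_abs_le:
  assumes "0 < n" "\<And>s. \<bar>c s\<bar> \<le> 1" "0 \<le> r"
  shows "\<bar>bump_sum n r S c x\<bar> \<le> real (card S) * (2 * r)"
proof -
  have "\<bar>bump_sum n r S c x\<bar> \<le> (\<Sum>s\<in>S. \<bar>c s * bump n r s x\<bar>)"
    unfolding bump_sum_def by (rule sum_abs)
  also have "\<dots> \<le> (\<Sum>s\<in>S. 2 * r)"
    using abs_mult_le_of_abs_le_one assms bump_le bump_nonneg
    by (intro sum_mono) (smt (verit))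
  finally show ?thesis by simp
qed

lemma bump_sum_at_center:
  assumes n: "0 < n" and r: "0 < r" and S: "separated n (4 * r) S" and s: "s \<in> S"
  shows "bump_sum n r S c s = c s * (2 * r)"
proof -
  have "bump n r s s = 2 * r" using bump_center[OF n] r by simp
  moreover have "bump_sum n r S c s = c s * bump n r s s"
    by (rule bump_sum_eq_single[OF _ s])
      (use S calculation r bump_disjoint[OF n S s] in \<open>auto simp: separated_def\<close>)
  ultimately show ?thesis by simp
qed

section \<open>Lower bound\<close>

definition collapse_measure :: "'a set \<Rightarrow> 'a \<Rightarrow> 'a set \<Rightarrow> 'a measure" where
  "collapse_measure S s0 B = borel_pmf (map_pmf (\<lambda>s. if s \<in> B then s else s0) (pmf_of_set S))"

lemma integral_bump_sum_collapse_measure: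
  assumes n: "0 < n" and r: "0 < r" and S: "separated n (4 * r) S" and s0: "s0 \<in> S"
    and B: "B \<subseteq> S - {s0}" and B': "B' \<subseteq> S - {s0}"
  shows "integral\<^sup>L (collapse_measure S s0 B) (bump_sum n r S (\<lambda>s. indicator B s - indicator B' s))
     = 2 * r * real (card (B - B')) / real (card S)"
proof -
  let ?g = "bump_sum n r S (\<lambda>s. indicator B s - indicator B' s)"
  have fin: "finite S" and ne: "S \<noteq> {}" using S s0 unfolding separated_def by auto
  have "(\<Sum>s\<in>S. ?g (if s \<in> B then s else s0)) = (\<Sum>s\<in>S. 2 * r * indicator (B - B') s)"
  proof (rule sum.cong[OF refl])
    fix s assume "s \<in> S"
    then have "(if s \<in> B then s else s0) \<in> S" using s0 by auto
    from bump_sum_at_center[OF n r S this]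
    show "?g (if s \<in> B then s else s0) = 2 * r * indicator (B - B') s"
      using B B' s0 by (auto simp: indicator_def)
  qed
  also have "\<dots> = 2 * r * real (card (B - B'))"
  proof -
    have "(\<Sum>s\<in>S. 2 * r * indicator (B - B') s) = (\<Sum>s\<in>S. if s \<in> B - B' then 2 * r else 0)"
      by (intro sum.cong) (auto simp: indicator_def)
    also have "\<dots> = (\<Sum>s\<in>S \<inter> (B - B'). 2 * r)" by (rule sum.inter_restrict[OF fin, symmetric])
    also have "S \<inter> (B - B') = B - B'" using B by auto
    finally show ?thesis by simp
  qed
  finally show ?thesis
    unfolding collapse_measure_def
    using fin ne borel_measurable_continuous_onI[OF continuous_on_bump_sum[OF n]]
    by (simp add: integral_borel_pmf integral_map_pmf integral_pmf_of_set)
qed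

text \<open>Test functions: the bump sums with coefficients \<open>\<plusminus>(1\<^sub>B - 1\<^sub>B\<^sub>')\<close>.\<close>
lemma card_sym_diff_le_wasserstein_n:
  assumes n: "0 < n" and r: "0 < r" and S: "separated n (4 * r) S" and s0: "s0 \<in> S"
    and B: "B \<subseteq> S - {s0}" and B': "B' \<subseteq> S - {s0}" and \<nu>: "\<nu> \<in> prob_measures"
    and W: "wasserstein_n f n (collapse_measure S s0 B) \<nu> \<le> e"
      "wasserstein_n f n (collapse_measure S s0 B') \<nu> \<le> e"
  shows "r * real (card (B - B') + card (B' - B)) \<le> e * real (card S)"
proof -
  have test: "integral\<^sup>L (collapse_measure S s0 C) (bump_sum n r S c)
      - integral\<^sup>L \<nu> (bump_sum n r S c) \<le> e"
    if "wasserstein_n f n (collapse_measure S s0 C) \<nu> \<le> e" and c: "\<And>s. \<bar>c s\<bar> \<le> 1" for C c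
  proof -
    have "couplings (collapse_measure S s0 C) \<nu> \<noteq> {}"
      unfolding collapse_measure_def using independent_coupling_borel_pmf[OF \<nu>] by blast
    from integral_diff_le_wasserstein_n[OF this n
        borel_measurable_continuous_onI[OF continuous_on_bump_sum[OF n]]
        bump_sum_abs_le[of n c, OF n c less_imp_le[OF r]] bump_sum_lipschitz[of n r S c, OF n S c]]
    show ?thesis using that(1) by linarith
  qed
  let ?c = "\<lambda>s. indicator B s - indicator B' s :: real"
  let ?c' = "\<lambda>s. indicator B' s - indicator B s :: real"
  have c: "\<bar>?c s\<bar> \<le> 1" "\<bar>?c' s\<bar> \<le> 1" for s by (auto simp: indicator_def)
  have "bump_sum n r S ?c' = (\<lambda>x. - bump_sum n r S ?c x)"
    unfolding bump_sum_def by (simp add: sum_negf[symmetric] algebra_simps)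
  then have "integral\<^sup>L \<nu> (bump_sum n r S ?c') = - integral\<^sup>L \<nu> (bump_sum n r S ?c)" by simp
  then have "2 * r * real (card (B - B')) / real (card S)
      + 2 * r * real (card (B' - B)) / real (card S) \<le> 2 * e"
    using test[of B ?c, OF W(1) c(1)] test[of B' ?c', OF W(2) c(2)]
    unfolding integral_bump_sum_collapse_measure[OF n r S s0 B B']
      integral_bump_sum_collapse_measure[OF n r S s0 B' B] by linarith
  moreover have "0 < real (card S)" using S s0 unfolding separated_def by (auto simp: card_gt_0_iff)
  ultimately show ?thesis by (simp add: add_divide_distrib[symmetric] divide_le_eq algebra_simps)
qed

definition covers :: "nat \<Rightarrow> real \<Rightarrow> 'a measure set \<Rightarrow> bool" where
  "covers n e E \<longleftrightarrow> finite E \<and> E \<subseteq> prob_measures \<and>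
     (\<forall>\<mu>\<in>prob_measures. \<exists>\<nu>\<in>E. wasserstein_n f n \<mu> \<nu> \<le> e)"

lemma cover_number_M_eq: "cover_number_M f prob_measures n e = Inf {card E | E. covers n e E}"
  unfolding cover_number_M_def covers_def by simp

lemma cover_number_M_le: "covers n e E \<Longrightarrow> cover_number_M f prob_measures n e \<le> card E"
  unfolding cover_number_M_eq by (rule cInf_lower) auto

lemma cover_number_M_attained:
  "covers n e E \<Longrightarrow> \<exists>E'. covers n e E' \<and> card E' = cover_number_M f prob_measures n e"
proof -
  assume "covers n e E"
  then have "{card E | E. covers n e E} \<noteq> {}" by auto
  then show ?thesis using Inf_nat_def1[of "{card E | E. covers n e E}"]
    unfolding cover_number_M_eq by auto
qed

lemma covers_mono: "covers n e E \<Longrightarrow> e \<le> e' \<Longrightarrow> covers n e' E"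
  unfolding covers_def by (meson order_trans)

lemma card_separated_le_ln_card_cover:
  assumes n: "0 < n" and r: "0 < r" and S: "separated n (4 * r) S" and K: "2 \<le> card S"
    and E: "covers n (r / 16) E"
  shows "real (card S) / 8 \<le> ln (real (card E))"
proof -
  obtain s0 where s0: "s0 \<in> S" using K by fastforce
  define T where "T = S - {s0}"
  have fin: "finite T" "finite E" using S E unfolding T_def separated_def covers_def by auto
  have cT: "card T = card S - 1" using s0 S unfolding T_def separated_def by simp
  define P where "P B \<nu> \<longleftrightarrow> \<nu> \<in> prob_measures \<and> wasserstein_n f n (collapse_measure S s0 B) \<nu> \<le> r / 16"
    for B \<nu>
  have "2 ^ card T \<le> card E * (\<Sum>i\<le>card S div 16. card T choose i)"
  proof (rule two_pow_card_le_card_mult_ball[OF fin])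
    fix B assume "B \<subseteq> T"
    show "\<exists>\<nu>\<in>E. P B \<nu>"
      using E borel_pmf_in_prob_measures unfolding P_def covers_def collapse_measure_def by blast
  next
    fix \<nu> B B' assume B: "B \<subseteq> T" "B' \<subseteq> T" "P B \<nu>" "P B' \<nu>"
    have "r * real (card (B - B') + card (B' - B)) \<le> r / 16 * real (card S)"
      by (rule card_sym_diff_le_wasserstein_n[OF n r S s0]) (use B in \<open>auto simp: P_def T_def\<close>)
    then have "r * (real (card (B - B') + card (B' - B)) * 16) \<le> r * real (card S)"
      by (simp add: algebra_simps)
    then have "real ((card (B - B') + card (B' - B)) * 16) \<le> real (card S)"
      using r by (simp only: mult_le_cancel_left_pos of_nat_mult)
    then show "card (B - B') + card (B' - B) \<le> card S div 16"
      by (simp only: of_nat_le_iff) (simp add: less_eq_div_iff_mult_less_eq)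
  qed
  from quarter_le_ln_of_two_power_le[OF this] have "real (card T) / 4 \<le> ln (real (card E))"
    using K cT by linarith
  then show ?thesis using K cT by linarith
qed

lemma ln_spanning_number_le_lg_lg_card_cover:
  assumes n: "0 < n" and r: "0 < r" and E: "covers n (r / 16) E"
  shows "ln (real (spanning_number f n (4 * r))) - 3 \<le> lg (lg (real (card E)))"
proof -
  obtain S where S: "separated n (4 * r) S" and SN: "spanning_number f n (4 * r) \<le> card S"
    using ex_separated_card_ge_spanning_number[OF n, of "4 * r"] r by auto
  have "1 \<le> spanning_number f n (4 * r)" using spanning_number_ge_one[OF n] r by simp
  then have lnSN: "ln (real (spanning_number f n (4 * r))) \<le> ln (real (card S))"
    using SN by simp
  show ?thesis
  proof (cases "card S \<le> 1")
    case True
    then have "ln (real (card S)) \<le> 0" by (cases "card S") auto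
    then show ?thesis using lnSN lg_lg_ge_minus_one[of "card E"] by linarith
  next
    case False
    then have K: "2 \<le> card S" by simp
    have E8: "real (card S) / 8 \<le> ln (real (card E))"
      by (rule card_separated_le_ln_card_cover[OF n r S K E])
    then have lnE: "0 < ln (real (card E))" using K by linarith
    then have "card E \<noteq> 0" by (intro notI) simp
    then have lgE: "lg (lg (real (card E))) = ln (ln (real (card E)))"
      using lnE by (simp add: lg_eq_ln)
    have "ln (real (card S)) - ln 8 = ln (real (card S) / 8)" using K by (simp add: ln_div)
    also have "\<dots> \<le> ln (ln (real (card E)))" using E8 K by simp
    finally show ?thesis
      using lnSN lgE ln_realpow[of 2 3] ln_2_less_1 by simp
  qed
qed

section \<open>Upper bound by quantized transport\<close>

text \<open>Taking the first close point of a list, rather than an arbitrary one, keeps the choice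
  Borel measurable.\<close>
primrec first_close :: "nat \<Rightarrow> real \<Rightarrow> 'a \<Rightarrow> 'a list \<Rightarrow> 'a \<Rightarrow> 'a" where
  "first_close n e d [] x = d"
| "first_close n e d (y # ys) x = (if bd n x y \<le> e then y else first_close n e d ys x)"

lemma first_close_spec:
  "\<exists>y\<in>set ys. bd n x y \<le> e \<Longrightarrow> first_close n e d ys x \<in> set ys \<and> bd n x (first_close n e d ys x) \<le> e"
  by (induction ys) auto

lemma measurable_first_close:
  assumes n: "0 < n" and h: "\<And>y. h y \<in> borel \<rightarrow>\<^sub>M N"
  shows "(\<lambda>x. h (first_close n e d ys x) x) \<in> borel \<rightarrow>\<^sub>M N"
proof (induction ys)
  case (Cons y ys)
  have "{x \<in> space borel. bd n x y \<le> e} \<in> sets borel"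
    using borel_measurable_continuous_onI[OF continuous_on_bowen_dist_left[OF n]] by measurable
  moreover have "(\<lambda>x. h (first_close n e d (y # ys) x) x)
      = (\<lambda>x. if bd n x y \<le> e then h y x else h (first_close n e d ys x) x)"
    by auto
  ultimately show ?case using measurable_If[OF h Cons] by simp
qed (simp add: h)

end

text \<open>A probability measure \<open>\<mu>\<close> is transported onto the points of the spanning list \<open>ys\<close>:
  a point \<open>x\<close> moves to \<open>cell x\<close> with probability \<open>keep_prob \<mu> (cell x)\<close> and to \<open>sink\<close> otherwise.
  The keep probabilities round the mass arriving at each \<open>y\<close> down to a multiple of \<open>1 / m\<close>,
  so the resulting measure only depends on the counts \<open>cell_count \<mu> y \<in> {0..m}\<close>.\<close>
locale quantized_transport = compact_dynamical_system +
  fixes n :: nat and e :: real and ys :: "'a list" and m :: nat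
  assumes n_pos: "0 < n" and e_pos: "0 < e" and m_pos: "0 < m"
    and spanning_ys: "\<And>x. \<exists>y\<in>set ys. bd n x y \<le> e"
begin

definition sink :: "'a" where
  "sink = hd ys"
definition cell :: "'a \<Rightarrow> 'a" where
  "cell x = first_close n e sink ys x"
definition cell_mass :: "'a measure \<Rightarrow> 'a \<Rightarrow> real" where
  "cell_mass \<mu> y = measure \<mu> {x. cell x = y}"
definition cell_count :: "'a measure \<Rightarrow> 'a \<Rightarrow> nat" where
  "cell_count \<mu> y = nat \<lfloor>real m * cell_mass \<mu> y\<rfloor>"
definition rounded_mass :: "'a measure \<Rightarrow> 'a \<Rightarrow> real" where
  "rounded_mass \<mu> y = real (cell_count \<mu> y) / real m"
definition keep_prob :: "'a measure \<Rightarrow> 'a \<Rightarrow> real" where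
  "keep_prob \<mu> y = (if cell_mass \<mu> y = 0 then 0 else rounded_mass \<mu> y / cell_mass \<mu> y)"
definition transport_kernel :: "'a measure \<Rightarrow> 'a \<Rightarrow> ('a \<times> 'a) measure" where
  "transport_kernel \<mu> x =
  distr (measure_pmf (bernoulli_pmf (keep_prob \<mu> (cell x)))) borel (\<lambda>b. (x, if b then cell x else sink))"
definition transport_plan :: "'a measure \<Rightarrow> ('a \<times> 'a) measure" where
  "transport_plan \<mu> = \<mu> \<bind> transport_kernel \<mu>"
definition quantized :: "'a measure \<Rightarrow> 'a measure" where
  "quantized \<mu> = distr (transport_plan \<mu>) borel snd"

lemma cell_in: "cell x \<in> set ys" and bowen_dist_cell_le: "bd n x (cell x) \<le> e"
  unfolding cell_def using first_close_spec[OF spanning_ys[of x]] by auto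

lemma measurable_cell:
  "(\<lambda>x. (x, cell x)) \<in> borel \<rightarrow>\<^sub>M borel" "(\<lambda>x. h (cell x)) \<in> borel \<rightarrow>\<^sub>M (borel :: 'b::topological_space measure)"
  unfolding cell_def
  by (rule measurable_first_close[OF n_pos, of "\<lambda>y x. (x, y)"]
      measurable_first_close[OF n_pos, of "\<lambda>y x. h y"];
      simp add: borel_measurable_continuous_onI continuous_intros)+

lemma cell_fiber_sets: "{x. cell x = y} \<in> sets borel"
  using measurable_sets[OF measurable_cell(2)[of "\<lambda>z. z"], of "{y}"] by (simp add: vimage_def)

lemma cell_mass_nonneg: "0 \<le> cell_mass \<mu> y"
  unfolding cell_mass_def by simp

lemma nn_integral_cell:
  assumes "\<mu> \<in> prob_measures"
  shows "(\<integral>\<^sup>+x. G (cell x) \<partial>\<mu>) = (\<Sum>y\<in>set ys. G y * ennreal (cell_mass \<mu> y))"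
proof -
  have P: "prob_space \<mu>" "sets \<mu> = sets borel" "space \<mu> = UNIV" using prob_measuresD[OF assms] by auto
  interpret prob_space \<mu> by (rule P(1))
  have "(\<integral>\<^sup>+x. G (cell x) \<partial>\<mu>) = (\<Sum>y\<in>set ys. G y * emeasure \<mu> {x. cell x = y})"
    by (rule nn_integral_finite_range[OF _ cell_in _ P(3)]) (use cell_fiber_sets P(2) in auto)
  then show ?thesis unfolding cell_mass_def by (simp add: emeasure_eq_measure)
qed

lemma sum_cell_mass:
  assumes "\<mu> \<in> prob_measures"
  shows "(\<Sum>y\<in>set ys. cell_mass \<mu> y) = 1"
proof -
  interpret prob_space \<mu> using prob_measuresD[OF assms] by simp
  have "ennreal (\<Sum>y\<in>set ys. cell_mass \<mu> y) = (\<integral>\<^sup>+x. 1 \<partial>\<mu>)"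
    using nn_integral_cell[OF assms, of "\<lambda>_. 1"] by (simp add: sum_ennreal cell_mass_nonneg)
  also have "\<dots> = 1" using prob_measuresD[OF assms] emeasure_space_1 by simp
  finally show ?thesis by (simp add: sum_nonneg cell_mass_nonneg)
qed

lemma cell_count_le: "\<mu> \<in> prob_measures \<Longrightarrow> cell_count \<mu> y \<le> m"
proof -
  assume "\<mu> \<in> prob_measures"
  then have "cell_mass \<mu> y \<le> 1"
    unfolding cell_mass_def using prob_measuresD prob_space.prob_le_1 by blast
  then have "real m * cell_mass \<mu> y \<le> real m" using cell_mass_nonneg[of \<mu> y] by (simp add: mult_left_le)
  then have "\<lfloor>real m * cell_mass \<mu> y\<rfloor> \<le> int m" by (metis floor_mono floor_of_nat)
  then show ?thesis unfolding cell_count_def by simp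
qed

lemma rounded_mass_nonneg: "0 \<le> rounded_mass \<mu> y"
  unfolding rounded_mass_def by simp

lemma rounded_mass_le: "rounded_mass \<mu> y \<le> cell_mass \<mu> y"
proof -
  have "real (cell_count \<mu> y) \<le> real m * cell_mass \<mu> y"
    unfolding cell_count_def using cell_mass_nonneg[of \<mu> y] by simp
  then show ?thesis unfolding rounded_mass_def using m_pos by (simp add: divide_le_eq mult.commute)
qed

lemma cell_mass_minus_rounded_mass_le: "cell_mass \<mu> y - rounded_mass \<mu> y \<le> 1 / real m"
proof -
  have "real m * cell_mass \<mu> y < real (cell_count \<mu> y) + 1"
    unfolding cell_count_def using cell_mass_nonneg[of \<mu> y] by simp
  then have "cell_mass \<mu> y < (real (cell_count \<mu> y) + 1) / real m"
    using m_pos by (simp add: less_divide_eq mult.commute)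
  then show ?thesis unfolding rounded_mass_def by (simp add: add_divide_distrib)
qed

lemma keep_prob_bounds: "0 \<le> keep_prob \<mu> y" "keep_prob \<mu> y \<le> 1"
  unfolding keep_prob_def using rounded_mass_le[of \<mu> y] rounded_mass_nonneg[of \<mu> y]
    cell_mass_nonneg[of \<mu> y]
  by (auto simp: divide_le_eq)

lemma keep_prob_mult_cell_mass:
  "keep_prob \<mu> y * cell_mass \<mu> y = rounded_mass \<mu> y"
  "(1 - keep_prob \<mu> y) * cell_mass \<mu> y = cell_mass \<mu> y - rounded_mass \<mu> y"
proof -
  show *: "keep_prob \<mu> y * cell_mass \<mu> y = rounded_mass \<mu> y"
    unfolding keep_prob_def using rounded_mass_le[of \<mu> y] rounded_mass_nonneg[of \<mu> y] by auto
  show "(1 - keep_prob \<mu> y) * cell_mass \<mu> y = cell_mass \<mu> y - rounded_mass \<mu> y"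
    using * by (simp add: algebra_simps)
qed

lemma sets_transport_kernel [simp]: "sets (transport_kernel \<mu> x) = sets borel"
  unfolding transport_kernel_def by simp

lemma nn_integral_transport_kernel:
  assumes "h \<in> borel_measurable (borel :: ('a \<times> 'a) measure)"
  shows "(\<integral>\<^sup>+z. h z \<partial>transport_kernel \<mu> x)
    = h (x, cell x) * ennreal (keep_prob \<mu> (cell x)) + h (x, sink) * ennreal (1 - keep_prob \<mu> (cell x))"
  unfolding transport_kernel_def using assms
  by (simp add: nn_integral_distr measurable_pmf_measure1 nn_integral_bernoulli_pmf keep_prob_bounds)

lemma emeasure_transport_kernel:
  assumes "A \<in> sets (borel :: ('a \<times> 'a) measure)"
  shows "emeasure (transport_kernel \<mu> x) A
    = indicator A (x, cell x) * ennreal (keep_prob \<mu> (cell x))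
      + indicator A (x, sink) * ennreal (1 - keep_prob \<mu> (cell x))"
  using nn_integral_transport_kernel[of "indicator A"] assms by (simp add: nn_integral_indicator)

lemma measurable_transport_kernel:
  assumes "\<mu> \<in> prob_measures"
  shows "transport_kernel \<mu> \<in> \<mu> \<rightarrow>\<^sub>M subprob_algebra borel"
proof (rule measurable_cong_borel)
  show "sets \<mu> = sets borel" using prob_measuresD[OF assms] by simp
  show "transport_kernel \<mu> \<in> borel \<rightarrow>\<^sub>M subprob_algebra borel"
  proof (rule measurable_subprob_algebra)
    fix x show "subprob_space (transport_kernel \<mu> x)"
      unfolding transport_kernel_def
      by (intro prob_space_imp_subprob_space measure_pmf.prob_space_distr) (simp add: measurable_pmf_measure1)
  next
    fix A :: "('a \<times> 'a) set" assume A: "A \<in> sets borel"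
    have "(\<lambda>x. (x, sink)) \<in> borel \<rightarrow>\<^sub>M borel"
      by (intro borel_measurable_continuous_onI continuous_intros)
    then have "(\<lambda>x. indicator A (x, cell x) :: ennreal) \<in> borel_measurable borel"
      "(\<lambda>x. indicator A (x, sink) :: ennreal) \<in> borel_measurable borel"
      using measurable_compose[OF _ borel_measurable_indicator[OF A]] measurable_cell(1) by auto
    moreover have "(\<lambda>x. ennreal (keep_prob \<mu> (cell x))) \<in> borel_measurable borel"
      "(\<lambda>x. ennreal (1 - keep_prob \<mu> (cell x))) \<in> borel_measurable borel"
      by (rule measurable_cell(2))+
    ultimately show "(\<lambda>x. emeasure (transport_kernel \<mu> x) A) \<in> borel_measurable borel"
      unfolding emeasure_transport_kernel[OF A] by measurable
  qed simp
qed

lemma transport_plan_in_couplings: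
  assumes \<mu>: "\<mu> \<in> prob_measures"
  shows "transport_plan \<mu> \<in> couplings \<mu> (quantized \<mu>)"
proof -
  have P: "prob_space \<mu>" "sets \<mu> = sets borel" "space \<mu> = UNIV" using prob_measuresD[OF \<mu>] by auto
  have K: "transport_kernel \<mu> \<in> \<mu> \<rightarrow>\<^sub>M subprob_algebra borel"
    by (rule measurable_transport_kernel[OF \<mu>])
  have fst: "fst \<in> (borel :: ('a \<times> 'a) measure) \<rightarrow>\<^sub>M borel"
    by (intro borel_measurable_continuous_onI continuous_intros)
  have "distr (transport_plan \<mu>) borel fst = \<mu> \<bind> (\<lambda>x. distr (transport_kernel \<mu> x) borel fst)"
    unfolding transport_plan_def by (rule distr_bind[OF K _ fst]) (use P in auto)
  also have "\<dots> = \<mu> \<bind> return borel"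
  proof (rule bind_cong[OF refl])
    fix x
    show "distr (transport_kernel \<mu> x) borel fst = return borel x"
      unfolding transport_kernel_def
      using distr_distr[OF fst, of "\<lambda>b. (x, if b then cell x else sink)"] measure_pmf.distr_const
      by (simp add: measurable_pmf_measure1 o_def)
  qed
  also have "\<dots> = \<mu>" by (rule bind_return'') (use P in auto)
  finally have "distr (transport_plan \<mu>) borel fst = \<mu>" .
  moreover have "prob_space (transport_plan \<mu>)"
    unfolding transport_plan_def using P K
    by (intro prob_space.prob_space_bind)
      (auto simp: transport_kernel_def intro!: measure_pmf.prob_space_distr)
  moreover have "sets (transport_plan \<mu>) = sets borel"
    unfolding transport_plan_def by (rule sets_bind) (use P in auto)
  ultimately show ?thesis unfolding couplings_def quantized_def by auto
qed

lemma quantized_in_prob_measures: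
  assumes "\<mu> \<in> prob_measures"
  shows "quantized \<mu> \<in> prob_measures"
proof -
  note \<pi> = couplingsD[OF transport_plan_in_couplings[OF assms]]
  have "snd \<in> transport_plan \<mu> \<rightarrow>\<^sub>M borel"
    by (intro measurable_cong_borel[OF \<pi>(2)] borel_measurable_continuous_onI continuous_intros)
  then show ?thesis
    unfolding prob_measures_def quantized_def using prob_space.prob_space_distr[OF \<pi>(1)] by simp
qed

lemma emeasure_quantized:
  assumes \<mu>: "\<mu> \<in> prob_measures" and A: "A \<in> sets borel"
  shows "emeasure (quantized \<mu>) A = ennreal ((\<Sum>y\<in>set ys. indicator A y * rounded_mass \<mu> y)
    + indicator A sink * (1 - (\<Sum>y\<in>set ys. rounded_mass \<mu> y)))"
proof -
  note \<pi> = couplingsD[OF transport_plan_in_couplings[OF \<mu>]]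
  have snd: "snd \<in> (borel :: ('a \<times> 'a) measure) \<rightarrow>\<^sub>M borel"
    by (intro borel_measurable_continuous_onI continuous_intros)
  have sA: "snd -` A \<in> sets (borel :: ('a \<times> 'a) measure)"
    using measurable_sets[OF snd A] by simp
  let ?G = "\<lambda>y. indicator A y * ennreal (keep_prob \<mu> y) + indicator A sink * ennreal (1 - keep_prob \<mu> y)"
  have "emeasure (quantized \<mu>) A = emeasure (transport_plan \<mu>) (snd -` A)"
    unfolding quantized_def using emeasure_distr[OF measurable_cong_borel[OF \<pi>(2) snd] A]
      sets_eq_imp_space_eq[OF \<pi>(2)] by simp
  also have "\<dots> = (\<integral>\<^sup>+x. emeasure (transport_kernel \<mu> x) (snd -` A) \<partial>\<mu>)"
    unfolding transport_plan_def
    by (rule emeasure_bind[OF _ measurable_transport_kernel[OF \<mu>] sA]) (use prob_measuresD[OF \<mu>] in simp)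
  also have "\<dots> = (\<integral>\<^sup>+x. ?G (cell x) \<partial>\<mu>)"
    by (rule nn_integral_cong) (simp add: emeasure_transport_kernel[OF sA] indicator_def)
  also have "\<dots> = (\<Sum>y\<in>set ys. ?G y * ennreal (cell_mass \<mu> y))" by (rule nn_integral_cell[OF \<mu>])
  also have "\<dots> = (\<Sum>y\<in>set ys. ennreal (indicator A y * rounded_mass \<mu> y
      + indicator A sink * (cell_mass \<mu> y - rounded_mass \<mu> y)))"
  proof (rule sum.cong[OF refl])
    fix y
    have ind: "(indicator A z :: ennreal) = ennreal (indicator A z)" for z
      by (simp add: indicator_def)
    have "?G y * ennreal (cell_mass \<mu> y) = ennreal (indicator A y * (keep_prob \<mu> y * cell_mass \<mu> y)
        + indicator A sink * ((1 - keep_prob \<mu> y) * cell_mass \<mu> y))"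
      unfolding ind by (rule ennreal_convex_combination_mult) (use keep_prob_bounds cell_mass_nonneg in auto)
    then show "?G y * ennreal (cell_mass \<mu> y) = ennreal (indicator A y * rounded_mass \<mu> y
      + indicator A sink * (cell_mass \<mu> y - rounded_mass \<mu> y))"
      by (simp only: keep_prob_mult_cell_mass)
  qed
  also have "\<dots> = ennreal (\<Sum>y\<in>set ys. indicator A y * rounded_mass \<mu> y
      + indicator A sink * (cell_mass \<mu> y - rounded_mass \<mu> y))"
    by (rule sum_ennreal) (use rounded_mass_nonneg rounded_mass_le in \<open>auto simp: indicator_def\<close>)
  also have "(\<Sum>y\<in>set ys. indicator A y * rounded_mass \<mu> y
      + indicator A sink * (cell_mass \<mu> y - rounded_mass \<mu> y))
    = (\<Sum>y\<in>set ys. indicator A y * rounded_mass \<mu> y)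
      + indicator A sink * (1 - (\<Sum>y\<in>set ys. rounded_mass \<mu> y))"
    using sum_cell_mass[OF \<mu>] by (simp add: sum.distrib sum_subtractf sum_distrib_left[symmetric])
  finally show ?thesis .
qed

lemma quantized_eq_if_cell_count_eq:
  assumes "\<mu> \<in> prob_measures" "\<mu>' \<in> prob_measures" "\<forall>y\<in>set ys. cell_count \<mu> y = cell_count \<mu>' y"
  shows "quantized \<mu> = quantized \<mu>'"
proof (rule measure_eqI)
  show "sets (quantized \<mu>) = sets (quantized \<mu>')" unfolding quantized_def by simp
  fix A assume "A \<in> sets (quantized \<mu>)"
  then have "A \<in> sets borel" unfolding quantized_def by simp
  then show "emeasure (quantized \<mu>) A = emeasure (quantized \<mu>') A"
    using assms by (simp add: emeasure_quantized rounded_mass_def)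
qed

lemma nn_integral_transport_kernel_cost_le:
  "(\<integral>\<^sup>+z. ennreal (bd n (fst z) (snd z)) \<partial>transport_kernel \<mu> x)
    \<le> ennreal (e + diam_bound * (1 - keep_prob \<mu> (cell x)))"
proof -
  let ?r = "keep_prob \<mu> (cell x)"
  have "(\<lambda>z. ennreal (bd n (fst z) (snd z))) \<in> borel_measurable borel"
    using borel_measurable_bowen_dist[OF n_pos] by measurable
  from nn_integral_transport_kernel[OF this]
  have "(\<integral>\<^sup>+z. ennreal (bd n (fst z) (snd z)) \<partial>transport_kernel \<mu> x)
      = ennreal (bd n x (cell x)) * ennreal ?r + ennreal (bd n x sink) * ennreal (1 - ?r)"
    by simp
  also have "\<dots> = ennreal (bd n x (cell x) * ?r + bd n x sink * (1 - ?r))"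
    using ennreal_convex_combination_mult[of "bd n x (cell x)" "bd n x sink" ?r 1]
      keep_prob_bounds bowen_dist_nonneg[OF n_pos] by simp
  also have "\<dots> \<le> ennreal (e + diam_bound * (1 - ?r))"
  proof (intro ennreal_leI add_mono)
    show "bd n x (cell x) * ?r \<le> e"
      using mult_mono[OF bowen_dist_cell_le[of x] keep_prob_bounds(2)] e_pos keep_prob_bounds(1) by simp
    show "bd n x sink * (1 - ?r) \<le> diam_bound * (1 - ?r)"
      using bowen_dist_le_diam_bound[OF n_pos] keep_prob_bounds(2) by (intro mult_right_mono) auto
  qed
  finally show ?thesis .
qed

lemma nn_integral_transport_cost_le:
  assumes \<mu>: "\<mu> \<in> prob_measures"
  shows "(\<integral>\<^sup>+z. ennreal (bd n (fst z) (snd z)) \<partial>transport_plan \<mu>)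
    \<le> ennreal (e + diam_bound * real (card (set ys)) / real m)"
proof -
  have "(\<integral>\<^sup>+z. ennreal (bd n (fst z) (snd z)) \<partial>transport_plan \<mu>)
      = (\<integral>\<^sup>+x. (\<integral>\<^sup>+z. ennreal (bd n (fst z) (snd z)) \<partial>transport_kernel \<mu> x) \<partial>\<mu>)"
    unfolding transport_plan_def
    by (rule nn_integral_bind[OF _ measurable_transport_kernel[OF \<mu>]])
      (use borel_measurable_bowen_dist[OF n_pos] in measurable)
  also have "\<dots> \<le> (\<integral>\<^sup>+x. ennreal (e + diam_bound * (1 - keep_prob \<mu> (cell x))) \<partial>\<mu>)"
    by (intro nn_integral_mono nn_integral_transport_kernel_cost_le)
  also have "\<dots> = (\<Sum>y\<in>set ys. ennreal (e + diam_bound * (1 - keep_prob \<mu> y)) * ennreal (cell_mass \<mu> y))"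
    by (rule nn_integral_cell[OF \<mu>])
  also have "\<dots> = (\<Sum>y\<in>set ys. ennreal (e * cell_mass \<mu> y + diam_bound * (cell_mass \<mu> y - rounded_mass \<mu> y)))"
  proof (rule sum.cong[OF refl])
    fix y
    have "0 \<le> e + diam_bound * (1 - keep_prob \<mu> y)" using e_pos diam_bound_pos keep_prob_bounds[of \<mu> y] by simp
    then have "ennreal (e + diam_bound * (1 - keep_prob \<mu> y)) * ennreal (cell_mass \<mu> y)
        = ennreal ((e + diam_bound * (1 - keep_prob \<mu> y)) * cell_mass \<mu> y)"
      using cell_mass_nonneg[of \<mu> y] by (simp add: ennreal_mult'[symmetric])
    also have "(e + diam_bound * (1 - keep_prob \<mu> y)) * cell_mass \<mu> y
        = e * cell_mass \<mu> y + diam_bound * (cell_mass \<mu> y - rounded_mass \<mu> y)"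
      using keep_prob_mult_cell_mass(2)[of \<mu> y] by (simp add: algebra_simps)
    finally show "ennreal (e + diam_bound * (1 - keep_prob \<mu> y)) * ennreal (cell_mass \<mu> y)
        = ennreal (e * cell_mass \<mu> y + diam_bound * (cell_mass \<mu> y - rounded_mass \<mu> y))" .
  qed
  also have "\<dots> = ennreal (\<Sum>y\<in>set ys. e * cell_mass \<mu> y + diam_bound * (cell_mass \<mu> y - rounded_mass \<mu> y))"
    using e_pos diam_bound_pos cell_mass_nonneg rounded_mass_le
    by (intro sum_ennreal add_nonneg_nonneg mult_nonneg_nonneg) auto
  also have "\<dots> \<le> ennreal (e + diam_bound * real (card (set ys)) / real m)"
  proof (rule ennreal_leI)
    have "(\<Sum>y\<in>set ys. e * cell_mass \<mu> y + diam_bound * (cell_mass \<mu> y - rounded_mass \<mu> y))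
        = e * (\<Sum>y\<in>set ys. cell_mass \<mu> y) + diam_bound * (\<Sum>y\<in>set ys. cell_mass \<mu> y - rounded_mass \<mu> y)"
      by (simp add: sum.distrib sum_distrib_left)
    also have "\<dots> \<le> e * 1 + diam_bound * (\<Sum>y\<in>set ys. 1 / real m)"
      using sum_cell_mass[OF \<mu>] diam_bound_pos e_pos
      by (intro add_mono mult_left_mono sum_mono cell_mass_minus_rounded_mass_le) auto
    finally show "(\<Sum>y\<in>set ys. e * cell_mass \<mu> y + diam_bound * (cell_mass \<mu> y - rounded_mass \<mu> y)) \<le> e + diam_bound * real (card (set ys)) / real m"
      by simp
  qed
  finally show ?thesis .
qed

lemma transport_cost_le:
  assumes \<mu>: "\<mu> \<in> prob_measures"
  shows "integral\<^sup>L (transport_plan \<mu>) (\<lambda>z. bd n (fst z) (snd z)) \<le> e + diam_bound * real (card (set ys)) / real m"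
proof -
  have "integral\<^sup>L (transport_plan \<mu>) (\<lambda>z. bd n (fst z) (snd z))
      = enn2real (\<integral>\<^sup>+z. ennreal (bd n (fst z) (snd z)) \<partial>transport_plan \<mu>)"
    using couplingsD(2)[OF transport_plan_in_couplings[OF \<mu>]] bowen_dist_nonneg[OF n_pos]
    by (intro integral_eq_nn_integral) (auto intro: measurable_cong_borel borel_measurable_bowen_dist[OF n_pos])
  also have "\<dots> \<le> enn2real (ennreal (e + diam_bound * real (card (set ys)) / real m))"
    by (rule enn2real_mono[OF nn_integral_transport_cost_le[OF \<mu>]]) simp
  also have "\<dots> = e + diam_bound * real (card (set ys)) / real m"
    using e_pos diam_bound_pos by (intro enn2real_ennreal) simp
  finally show ?thesis .
qed

end

context compact_dynamical_system
begin

lemma ex_cover_card_le_power: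
  assumes n: "0 < n" and e: "0 < e" and m: "0 < m"
  shows "\<exists>E. covers n (e + diam_bound * real (spanning_number f n e) / real m) E
    \<and> card E \<le> (m + 1) ^ spanning_number f n e"
proof -
  obtain F where F: "spanning n e F" "card F = spanning_number f n e"
    using spanning_number_attained[OF n e] by blast
  have finF: "finite F" using F(1) unfolding spanning_def by simp
  obtain ys where ys: "set ys = F" using finite_list[OF finF] by blast
  interpret Q: quantized_transport f n e ys m
    by unfold_locales (use n e m F(1) ys in \<open>auto simp: spanning_def\<close>)
  let ?P = "prob_measures :: 'a measure set"
  define count where "count \<mu> = restrict (Q.cell_count \<mu>) F" for \<mu>
  define \<Psi> where "\<Psi> \<kappa> = Q.quantized (SOME \<mu>. \<mu> \<in> ?P \<and> count \<mu> = \<kappa>)" for \<kappa>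
  have quantized_eq: "Q.quantized \<mu> = \<Psi> (count \<mu>)" if \<mu>: "\<mu> \<in> ?P" for \<mu>
  proof -
    define \<mu>' where "\<mu>' = (SOME \<mu>'. \<mu>' \<in> ?P \<and> count \<mu>' = count \<mu>)"
    have \<mu>': "\<mu>' \<in> ?P" "count \<mu>' = count \<mu>"
      using someI_ex[of "\<lambda>\<mu>'. \<mu>' \<in> ?P \<and> count \<mu>' = count \<mu>"] \<mu> unfolding \<mu>'_def by auto
    then have "\<forall>y\<in>set ys. Q.cell_count \<mu> y = Q.cell_count \<mu>' y"
      unfolding count_def ys by (metis restrict_apply')
    then show ?thesis
      unfolding \<Psi>_def \<mu>'_def[symmetric] by (rule Q.quantized_eq_if_cell_count_eq[OF \<mu> \<mu>'(1)])
  qed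
  have "count \<mu> \<in> F \<rightarrow>\<^sub>E {0..m}" if "\<mu> \<in> ?P" for \<mu>
    using Q.cell_count_le[OF that] unfolding count_def by auto
  then have sub: "Q.quantized ` ?P \<subseteq> \<Psi> ` (F \<rightarrow>\<^sub>E {0..m})" using quantized_eq by blast
  have fin: "finite (F \<rightarrow>\<^sub>E {0..m})" by (rule finite_PiE) (use finF in auto)
  have "card (Q.quantized ` ?P) \<le> card (F \<rightarrow>\<^sub>E {0..m})"
    using card_mono[OF finite_imageI[OF fin] sub] card_image_le[OF fin, of \<Psi>] by linarith
  also have "\<dots> = (m + 1) ^ spanning_number f n e"
    using card_PiE[OF finF, of "\<lambda>_. {0..m}"] F(2) by simp
  finally have card: "card (Q.quantized ` ?P) \<le> (m + 1) ^ spanning_number f n e" .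
  have "\<exists>\<nu>\<in>Q.quantized ` ?P. wasserstein_n f n \<mu> \<nu> \<le> e + diam_bound * real (spanning_number f n e) / real m"
    if \<mu>: "\<mu> \<in> ?P" for \<mu>
  proof -
    have "wasserstein_n f n \<mu> (Q.quantized \<mu>) \<le> integral\<^sup>L (Q.transport_plan \<mu>) (\<lambda>z. bd n (fst z) (snd z))"
      by (rule wasserstein_n_le_cost[OF Q.transport_plan_in_couplings[OF \<mu>] n])
    also have "\<dots> \<le> e + diam_bound * real (card (set ys)) / real m" by (rule Q.transport_cost_le[OF \<mu>])
    finally show ?thesis using \<mu> ys F(2) by auto
  qed
  moreover have "finite (Q.quantized ` ?P)" using finite_subset[OF sub] fin by blast
  ultimately show ?thesis
    using card Q.quantized_in_prob_measures unfolding covers_def by blast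
qed

lemma ex_cover_card_le:
  assumes n: "0 < n" and e: "0 < e"
  shows "\<exists>E. covers n (2 * e) E \<and>
    real (card E) \<le> ((diam_bound / e + 3) * real (spanning_number f n e)) ^ spanning_number f n e"
proof -
  define K where "K = spanning_number f n e"
  have K: "1 \<le> K" unfolding K_def by (rule spanning_number_ge_one[OF n e])
  define m where "m = nat \<lceil>diam_bound * real K / e\<rceil> + 1"
  have m: "0 < m" unfolding m_def by simp
  have D: "0 \<le> diam_bound * real K / e" using diam_bound_pos e by simp
  have "diam_bound * real K / e \<le> real m" unfolding m_def by linarith
  then have "diam_bound * real K / real m \<le> e" using e m by (simp add: field_simps)
  then have le: "e + diam_bound * real K / real m \<le> 2 * e" by linarith
  obtain E where E: "covers n (e + diam_bound * real K / real m) E" "card E \<le> (m + 1) ^ K"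
    using ex_cover_card_le_power[OF n e m] unfolding K_def by blast
  have "real (nat \<lceil>diam_bound * real K / e\<rceil>) = real_of_int \<lceil>diam_bound * real K / e\<rceil>" using D by simp
  then have "real m \<le> diam_bound * real K / e + 2"
    unfolding m_def using of_int_ceiling_le_add_one[of "diam_bound * real K / e"] by linarith
  then have "real (m + 1) \<le> (diam_bound / e + 3) * real K" using K by (simp add: algebra_simps)
  then have "real (card E) \<le> ((diam_bound / e + 3) * real K) ^ K"
    using E(2) power_mono[of "real (m + 1)" _ K] by (metis of_nat_le_iff of_nat_power of_nat_0_le_iff order_trans)
  then show ?thesis using covers_mono[OF E(1) le] unfolding K_def by blast
qed

lemma lg_lg_cover_number_M_le:
  assumes n: "0 < n" and e: "0 < e" and \<theta>: "0 < \<theta>" "\<theta> \<le> 1"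
  shows "lg (lg (real (cover_number_M f prob_measures n (2 * e))))
    \<le> (1 + \<theta>) * ln (real (spanning_number f n e)) + ln (max 1 (ln (diam_bound / e + 3)) / \<theta>)"
proof (rule lg_lg_le_of_le_power[OF _ _ spanning_number_ge_one[OF n e] \<theta>])
  obtain E where E: "covers n (2 * e) E"
    "real (card E) \<le> ((diam_bound / e + 3) * real (spanning_number f n e)) ^ spanning_number f n e"
    using ex_cover_card_le[OF n e] by blast
  show "real (cover_number_M f prob_measures n (2 * e))
      \<le> ((diam_bound / e + 3) * real (spanning_number f n e)) ^ spanning_number f n e"
    using cover_number_M_le[OF E(1)] E(2) by (meson of_nat_le_iff order_trans)
  show "3 \<le> diam_bound / e + 3" using diam_bound_pos e by simp
qed

lemma ln_spanning_number_le_lg_lg_cover_number_M: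
  assumes n: "0 < n" and r: "0 < r"
  shows "ln (real (spanning_number f n (4 * r))) - 3 \<le> lg (lg (real (cover_number_M f prob_measures n (r / 16))))"
proof -
  obtain E where "covers n (2 * (r / 32)) E" using ex_cover_card_le[OF n, of "r / 32"] r by auto
  then have "covers n (r / 16) E" by simp
  from cover_number_M_attained[OF this] obtain E'
    where "covers n (r / 16) E'" "card E' = cover_number_M f prob_measures n (r / 16)" by blast
  then show ?thesis using ln_spanning_number_le_lg_lg_card_cover[OF n r] by metis
qed

section \<open>Entropies at a fixed scale\<close>

definition top_entropy_scale :: "real \<Rightarrow> ereal" where
  "top_entropy_scale e = limsup (\<lambda>n. ereal (lg (real (spanning_number f n e)) / real n))"

definition entropy_order_scale :: "real \<Rightarrow> ereal" where
  "entropy_order_scale e =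
     limsup (\<lambda>n. ereal (lg (lg (real (cover_number_M f prob_measures n e))) / real n))"

lemma lg_spanning_number:
  "0 < n \<Longrightarrow> 0 < e \<Longrightarrow> lg (real (spanning_number f n e)) = ln (real (spanning_number f n e))"
  using spanning_number_ge_one[of n e] by (simp add: lg_eq_ln)

lemma top_entropy_scale_nonneg: "0 < e \<Longrightarrow> 0 \<le> top_entropy_scale e"
proof -
  assume e: "0 < e"
  have "limsup (\<lambda>n. (0::ereal)) \<le> top_entropy_scale e"
    unfolding top_entropy_scale_def
  proof (rule Limsup_mono, unfold eventually_sequentially, intro exI allI impI)
    fix n :: nat assume "1 \<le> n"
    then show "0 \<le> ereal (lg (real (spanning_number f n e)) / real n)"
      using spanning_number_ge_one[of n e] lg_spanning_number[of n e] e by simp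
  qed
  then show ?thesis by (simp add: Limsup_const)
qed

lemma top_entropy_scale_antimono: "0 < e \<Longrightarrow> e \<le> e' \<Longrightarrow> top_entropy_scale e' \<le> top_entropy_scale e"
  unfolding top_entropy_scale_def
proof (rule Limsup_mono, unfold eventually_sequentially, intro exI allI impI)
  fix n :: nat assume e: "0 < e" "e \<le> e'" and n: "1 \<le> n"
  have "ln (real (spanning_number f n e')) \<le> ln (real (spanning_number f n e))"
    using spanning_number_antimono[of n e e'] spanning_number_ge_one[of n e'] e n by simp
  then show "ereal (lg (real (spanning_number f n e')) / real n) \<le> ereal (lg (real (spanning_number f n e)) / real n)"
    using lg_spanning_number[of n e] lg_spanning_number[of n e'] e n by (simp add: divide_right_mono)
qed

lemma top_entropy_scale_le_entropy_order_scale: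
  assumes r: "0 < r"
  shows "top_entropy_scale (4 * r) \<le> entropy_order_scale (r / 16)"
proof -
  let ?N = "\<lambda>n. cover_number_M f prob_measures n (r / 16)"
  have "top_entropy_scale (4 * r) \<le> limsup (\<lambda>n. ereal (lg (lg (real (?N n))) / real n) + ereal (3 / real n))"
    unfolding top_entropy_scale_def
  proof (rule Limsup_mono, unfold eventually_sequentially, intro exI allI impI)
    fix n :: nat assume n: "1 \<le> n"
    have "ln (real (spanning_number f n (4 * r))) / real n \<le> (lg (lg (real (?N n))) + 3) / real n"
      using ln_spanning_number_le_lg_lg_cover_number_M[of n r] n r by (intro divide_right_mono) simp_all
    then show "ereal (lg (real (spanning_number f n (4 * r))) / real n)
        \<le> ereal (lg (lg (real (?N n))) / real n) + ereal (3 / real n)"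
      using lg_spanning_number[of n "4 * r"] n r by (simp add: add_divide_distrib)
  qed
  also have "\<dots> \<le> entropy_order_scale (r / 16) + limsup (\<lambda>n. ereal (3 / real n))"
    unfolding entropy_order_scale_def by (rule ereal_limsup_add_mono)
  finally show ?thesis by (simp add: limsup_const_over_n)
qed

lemma entropy_order_scale_le_top_entropy_scale:
  assumes e: "0 < e"
  shows "entropy_order_scale (2 * e) \<le> top_entropy_scale e"
proof (rule ereal_le_of_le_one_plus_mult[OF top_entropy_scale_nonneg[OF e]])
  fix \<theta> :: real assume \<theta>: "0 < \<theta>" "\<theta> \<le> 1"
  define C where "C = ln (max 1 (ln (diam_bound / e + 3)) / \<theta>)"
  let ?h = "\<lambda>n. ereal (lg (real (spanning_number f n e)) / real n)"
  have "entropy_order_scale (2 * e) \<le> limsup (\<lambda>n. ereal (1 + \<theta>) * ?h n + ereal (C / real n))"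
    unfolding entropy_order_scale_def
  proof (rule Limsup_mono, unfold eventually_sequentially, intro exI allI impI)
    fix n :: nat assume n: "1 \<le> n"
    have "lg (lg (real (cover_number_M f prob_measures n (2 * e)))) / real n
        \<le> ((1 + \<theta>) * ln (real (spanning_number f n e)) + C) / real n"
      using lg_lg_cover_number_M_le[of n e \<theta>] n e \<theta> unfolding C_def
      by (intro divide_right_mono) simp_all
    then show "ereal (lg (lg (real (cover_number_M f prob_measures n (2 * e)))) / real n)
        \<le> ereal (1 + \<theta>) * ?h n + ereal (C / real n)"
      using lg_spanning_number[of n e] n e by (simp add: add_divide_distrib)
  qed
  also have "\<dots> \<le> limsup (\<lambda>n. ereal (1 + \<theta>) * ?h n) + limsup (\<lambda>n. ereal (C / real n))"
    by (rule ereal_limsup_add_mono)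
  also have "limsup (\<lambda>n. ereal (1 + \<theta>) * ?h n) = ereal (1 + \<theta>) * top_entropy_scale e"
    unfolding top_entropy_scale_def
    by (rule Limsup_ereal_mult_left[OF trivial_limit_sequentially]) (use \<theta> in simp)
  finally show "entropy_order_scale (2 * e) \<le> ereal (1 + \<theta>) * top_entropy_scale e"
    by (simp add: limsup_const_over_n)
qed

definition top_entropy_sup :: ereal where
  "top_entropy_sup = (SUP e\<in>{0<..}. top_entropy_scale e)"

lemma top_entropy_scale_le_sup: "0 < e \<Longrightarrow> top_entropy_scale e \<le> top_entropy_sup"
  unfolding top_entropy_sup_def by (rule SUP_upper) simp

lemma top_entropy_scale_tendsto: "(top_entropy_scale \<longlongrightarrow> top_entropy_sup) (at_right 0)"
proof (rule order_tendstoI)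
  fix a assume "a < top_entropy_sup"
  then obtain e0 where e0: "0 < e0" "a < top_entropy_scale e0"
    unfolding top_entropy_sup_def by (auto simp: less_SUP_iff)
  show "\<forall>\<^sub>F x in at_right 0. a < top_entropy_scale x"
    unfolding eventually_at_right_field
    by (rule exI[of _ e0]) (use e0 top_entropy_scale_antimono in \<open>force intro: order_less_le_trans\<close>)
next
  fix a assume "top_entropy_sup < a"
  then show "\<forall>\<^sub>F x in at_right 0. top_entropy_scale x < a"
    unfolding eventually_at_right_field
    by (intro exI[of _ 1]) (use top_entropy_scale_le_sup in \<open>force intro: order_le_less_trans\<close>)
qed

lemma entropy_order_scale_tendsto: "(entropy_order_scale \<longlongrightarrow> top_entropy_sup) (at_right 0)"
proof (rule order_tendstoI)
  fix a assume "a < top_entropy_sup"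
  then obtain e0 where e0: "0 < e0" "a < top_entropy_scale e0"
    unfolding top_entropy_sup_def by (auto simp: less_SUP_iff)
  have "a < entropy_order_scale y" if y: "0 < y" "y < e0 / 64" for y
  proof -
    have "top_entropy_scale e0 \<le> top_entropy_scale (4 * (16 * y))"
      using top_entropy_scale_antimono[of "4 * (16 * y)" e0] y by simp
    also have "\<dots> \<le> entropy_order_scale (16 * y / 16)"
      by (rule top_entropy_scale_le_entropy_order_scale) (use y in simp)
    finally show ?thesis using e0 by simp
  qed
  then show "\<forall>\<^sub>F x in at_right 0. a < entropy_order_scale x"
    unfolding eventually_at_right_field by (intro exI[of _ "e0 / 64"]) (use e0 in auto)
next
  fix a assume a: "top_entropy_sup < a"
  have "entropy_order_scale y < a" if "0 < y" for y
  proof -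
    have "entropy_order_scale (2 * (y / 2)) \<le> top_entropy_scale (y / 2)"
      by (rule entropy_order_scale_le_top_entropy_scale) (use that in simp)
    also have "\<dots> \<le> top_entropy_sup" by (rule top_entropy_scale_le_sup) (use that in simp)
    finally show ?thesis using a by simp
  qed
  then show "\<forall>\<^sub>F x in at_right 0. entropy_order_scale x < a"
    unfolding eventually_at_right_field by (intro exI[of _ 1]) auto
qed

end

theorem theorem1p2:
  fixes f :: "'a::metric_space \<Rightarrow> 'a"
  assumes "compact (UNIV :: 'a set)"
    and "continuous_on UNIV f"
  shows "entropy_order f prob_measures = top_entropy f"
proof -
  interpret compact_dynamical_system f using assms by unfold_locales
  have "entropy_order f prob_measures = Lim (at_right 0) entropy_order_scale"
    unfolding entropy_order_def entropy_order_scale_def ..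
  also have "\<dots> = top_entropy_sup"
    by (rule tendsto_Lim[OF trivial_limit_at_right_real entropy_order_scale_tendsto])
  also have "\<dots> = Lim (at_right 0) top_entropy_scale"
    by (rule tendsto_Lim[OF trivial_limit_at_right_real top_entropy_scale_tendsto, symmetric])
  also have "\<dots> = top_entropy f"
    unfolding top_entropy_def top_entropy_scale_def ..
  finally show ?thesis .
qed

end
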